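(* Let $\mathfrak{G}$ be a right-angled graph of groups, $\omega$ a vertex and $\mathfrak{X}=\mathfrak{X}(\mathfrak{G},\omega)$. Let $e,f$ be two edges of $\mathfrak{X}$ labelled by factors $A$ and $B$ respectively, where $A$ is a factor of $G_u$ and $B$ a factor of $G_v$. If $e$ and $f$ belong to the same hyperplane, then there exists an oriented path $\gamma$ in the underlying abstract graph of $\mathfrak{G}$ from $u$ to $v$ such that $\varphi_\gamma(A)=B$.
   Context: An abstract graph consists of a set $V$ of vertices, a set $E$ of arrows, a fixed-point-free involution $e\mapsto\bar e$ on $E$, and maps $s,t:E\to V$ with $t(e)=s(\bar e)$; it is assumed connected. A right-angled graph of groups $\mathfrak{G}$ consists of an abstract graph, for each $v\in V$ a group $G_v$ with a fixed decomposition as a graph product $\Gamma_v\mathcal{G}_v$ (over a simplicial graph $\Gamma_v$ with non-trivial vertex-groups), for each $e\in E$ a group $G_e=G_{\bar e}$ with a fixed decomposition as a graph product, and monomorphisms $\iota_e:G_e\hookrightarrow G_{s(e)}$ which are graphical embeddings: there is an embedding $f$ of the graph of $G_e$ onto an induced subgraph of $\Gamma_{s(e)}$ such that $\iota_e$ restricts to an isomorphism from each vertex-group of $G_e$ onto the vertex-group of $G_{s(e)}$ indexed by the image under $f$ of its vertex. The factors of $G_v$ are the vertex-groups of its fixed graph product decomposition. The fundamental groupoid $\mathfrak{F}$ is the groupoid with object set $V$ generated by the arrows $e\in E$ (morphisms from $s(e)$ to $t(e)$) and the elements of each $G_v$ (morphisms from $v$ to $v$), subject to the relations of each $G_v$,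 $\bar e=e^{-1}$, and $\iota_e(g)\cdot e=e\cdot\iota_{\bar e}(g)$ for $e\in E$, $g\in G_e$. Products are written left to right; the terminus of a morphism is its terminal object. The graph $\mathfrak{X}(\mathfrak{G},\omega)$ has as vertices the morphisms of $\mathfrak{F}$ with initial object $\omega$, two vertices $g,h$ being adjacent iff $h=gs$ where $s$ is either an arrow or a non-trivial element of some factor; such an edge is labelled by that arrow or by the factor containing $s$. It is a quasi-median graph. Hyperplanes are equivalence classes of edges for the transitive closure of "lie in a common triangle or are opposite sides of an induced 4-cycle". For an arrow $e$ and a factor $A$ of $G_{s(e)}$, set $\varphi_e(A):=\iota_{\bar e}(\iota_e^{-1}(A))$ (a factor of $G_{t(e)}$) if $A\subset\iota_e(G_e)$ and $\varphi_e(A):=\emptyset$ otherwise, with $\varphi_e(\emptyset)=\emptyset$. For an oriented path $\gamma=e_1\cdots e_n$, $\varphi_\gamma:=\varphi_{e_n}\circ\cdots\circ\varphi_{e_1}$. *)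

theory Defs
  imports "HOL-Algebra.Group"
begin

text \<open>A graph product over a simplicial graph with vertex set I, adjacency adj and
vertex-groups G i is presented by words of letters (i,g), g in carrier (G i),
modulo: merging two consecutive letters of the same vertex-group, deleting a
trivial letter, and swapping consecutive letters from adjacent vertex-groups.\<close>

definition gp_word :: "'i set \<Rightarrow> ('i \<Rightarrow> 'g monoid) \<Rightarrow> ('i \<times> 'g) list \<Rightarrow> bool" where
  "gp_word I G w \<longleftrightarrow> (\<forall>(i,g)\<in>set w. i \<in> I \<and> g \<in> carrier (G i))"

definition gp_move :: "('i \<Rightarrow> 'i \<Rightarrow> bool) \<Rightarrow> ('i \<Rightarrow> 'g monoid) \<Rightarrow> ('i \<times> 'g) list \<Rightarrow> ('i \<times> 'g) list \<Rightarrow> bool" where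
  "gp_move adj G l r \<longleftrightarrow>
     (\<exists>i g h. l = [(i,g),(i,h)] \<and> r = [(i, g \<otimes>\<^bsub>G i\<^esub> h)])
   \<or> (\<exists>i. l = [(i, \<one>\<^bsub>G i\<^esub>)] \<and> r = [])
   \<or> (\<exists>i j g h. adj i j \<and> l = [(i,g),(j,h)] \<and> r = [(j,h),(i,g)])"

inductive gp_eq :: "'i set \<Rightarrow> ('i \<Rightarrow> 'i \<Rightarrow> bool) \<Rightarrow> ('i \<Rightarrow> 'g monoid) \<Rightarrow> ('i \<times> 'g) list \<Rightarrow> ('i \<times> 'g) list \<Rightarrow> bool"
  for I adj G where
  gp_refl: "gp_word I G w \<Longrightarrow> gp_eq I adj G w w"
| gp_step: "gp_move adj G l r \<Longrightarrow> gp_word I G (u @ l @ w) \<Longrightarrow> gp_word I G (u @ r @ w)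
            \<Longrightarrow> gp_eq I adj G (u @ l @ w) (u @ r @ w)"
| gp_sym: "gp_eq I adj G w w' \<Longrightarrow> gp_eq I adj G w' w"
| gp_trans: "gp_eq I adj G w w' \<Longrightarrow> gp_eq I adj G w' w'' \<Longrightarrow> gp_eq I adj G w w''"

definition gp_class :: "'i set \<Rightarrow> ('i \<Rightarrow> 'i \<Rightarrow> bool) \<Rightarrow> ('i \<Rightarrow> 'g monoid) \<Rightarrow> ('i \<times> 'g) list \<Rightarrow> ('i \<times> 'g) list set" where
  "gp_class I adj G w = {w'. gp_eq I adj G w w'}"

definition gp_elems :: "'i set \<Rightarrow> ('i \<Rightarrow> 'i \<Rightarrow> bool) \<Rightarrow> ('i \<Rightarrow> 'g monoid) \<Rightarrow> ('i \<times> 'g) list set set" where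
  "gp_elems I adj G = {gp_class I adj G w | w. gp_word I G w}"

definition gp_factor :: "'i set \<Rightarrow> ('i \<Rightarrow> 'i \<Rightarrow> bool) \<Rightarrow> ('i \<Rightarrow> 'g monoid) \<Rightarrow> 'i \<Rightarrow> ('i \<times> 'g) list set set" where
  "gp_factor I adj G x = {gp_class I adj G [(x,g)] | g. g \<in> carrier (G x)}"

text \<open>Data: abstract graph (Vs, Es, rv = involution, src, tgt); for each vertex v a
simplicial graph (GV v, Gadj v) with vertex-groups Gfac v x; for each arrow e a
simplicial graph (EV e, Eadj e) with vertex-groups Efac e y (the decomposition of G_e);
the graphical embedding iota_e is given by the graph embedding emb e together with the
isomorphisms emb_iso e y from Efac e y onto Gfac (src e) (emb e y).\<close>

record ('v,'e,'x,'y,'g) rag =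
  Vs :: "'v set"
  Es :: "'e set"
  rv :: "'e \<Rightarrow> 'e"
  src :: "'e \<Rightarrow> 'v"
  tgt :: "'e \<Rightarrow> 'v"
  GV :: "'v \<Rightarrow> 'x set"
  Gadj :: "'v \<Rightarrow> 'x \<Rightarrow> 'x \<Rightarrow> bool"
  Gfac :: "'v \<Rightarrow> 'x \<Rightarrow> 'g monoid"
  EV :: "'e \<Rightarrow> 'y set"
  Eadj :: "'e \<Rightarrow> 'y \<Rightarrow> 'y \<Rightarrow> bool"
  Efac :: "'e \<Rightarrow> 'y \<Rightarrow> 'g monoid"
  emb :: "'e \<Rightarrow> 'y \<Rightarrow> 'x"
  emb_iso :: "'e \<Rightarrow> 'y \<Rightarrow> 'g \<Rightarrow> 'g"

fun opath :: "('v,'e,'x,'y,'g) rag \<Rightarrow> 'v \<Rightarrow> 'e list \<Rightarrow> 'v \<Rightarrow> bool" where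
  "opath R u [] v \<longleftrightarrow> u = v"
| "opath R u (e # \<gamma>) v \<longleftrightarrow> e \<in> Es R \<and> src R e = u \<and> opath R (tgt R e) \<gamma> v"

definition simplicial :: "'a set \<Rightarrow> ('a \<Rightarrow> 'a \<Rightarrow> bool) \<Rightarrow> bool" where
  "simplicial I adj \<longleftrightarrow> (\<forall>x y. adj x y \<longrightarrow> x \<in> I \<and> y \<in> I \<and> x \<noteq> y \<and> adj y x)"

definition nontriv_groups :: "'a set \<Rightarrow> ('a \<Rightarrow> 'g monoid) \<Rightarrow> bool" where
  "nontriv_groups I G \<longleftrightarrow> (\<forall>x\<in>I. group (G x) \<and> carrier (G x) \<noteq> {\<one>\<^bsub>G x\<^esub>})"

definition rag_gog :: "('v,'e,'x,'y,'g) rag \<Rightarrow> bool" where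
  "rag_gog R \<longleftrightarrow>
     (\<forall>e\<in>Es R. rv R e \<in> Es R \<and> rv R e \<noteq> e \<and> rv R (rv R e) = e \<and> src R e \<in> Vs R
               \<and> tgt R e = src R (rv R e))
   \<and> Vs R \<noteq> {} \<and> (\<forall>u\<in>Vs R. \<forall>v\<in>Vs R. \<exists>\<gamma>. opath R u \<gamma> v)
   \<and> (\<forall>v\<in>Vs R. simplicial (GV R v) (Gadj R v) \<and> nontriv_groups (GV R v) (Gfac R v))
   \<and> (\<forall>e\<in>Es R. simplicial (EV R e) (Eadj R e) \<and> nontriv_groups (EV R e) (Efac R e)
        \<and> EV R (rv R e) = EV R e \<and> Eadj R (rv R e) = Eadj R e \<and> Efac R (rv R e) = Efac R e
        \<and> inj_on (emb R e) (EV R e) \<and> emb R e ` EV R e \<subseteq> GV R (src R e)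
        \<and> (\<forall>y\<in>EV R e. \<forall>y'\<in>EV R e. Eadj R e y y' \<longleftrightarrow> Gadj R (src R e) (emb R e y) (emb R e y'))
        \<and> (\<forall>y\<in>EV R e. emb_iso R e y \<in> iso (Efac R e y) (Gfac R (src R e) (emb R e y))))"

definition Gv where "Gv R v = gp_elems (GV R v) (Gadj R v) (Gfac R v)"
definition Ge where "Ge R e = gp_elems (EV R e) (Eadj R e) (Efac R e)"
definition Afac where "Afac R v x = gp_factor (GV R v) (Gadj R v) (Gfac R v) x"

definition iota :: "('v,'e,'x,'y,'g) rag \<Rightarrow> 'e \<Rightarrow> ('y \<times> 'g) list set \<Rightarrow> ('x \<times> 'g) list set" where
  "iota R e c = gp_class (GV R (src R e)) (Gadj R (src R e)) (Gfac R (src R e))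
                  (map (\<lambda>(y,h). (emb R e y, emb_iso R e y h)) (SOME w. w \<in> c))"

text \<open>phi_e on subsets of G_{s(e)} (applied to factors or the empty set).\<close>
definition phi_e :: "('v,'e,'x,'y,'g) rag \<Rightarrow> 'e \<Rightarrow> ('x \<times> 'g) list set set \<Rightarrow> ('x \<times> 'g) list set set" where
  "phi_e R e S = (if S \<subseteq> iota R e ` Ge R e
                  then iota R (rv R e) ` {c \<in> Ge R e. iota R e c \<in> S} else {})"

definition phi_path :: "('v,'e,'x,'y,'g) rag \<Rightarrow> 'e list \<Rightarrow> ('x \<times> 'g) list set set \<Rightarrow> ('x \<times> 'g) list set set" where
  "phi_path R \<gamma> S = fold (phi_e R) \<gamma> S"

datatype ('v,'e,'x,'g) letter = Ar 'e | El 'v 'x 'g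

fun wend :: "('v,'e,'x,'y,'g) rag \<Rightarrow> 'v \<Rightarrow> ('v,'e,'x,'g) letter list \<Rightarrow> 'v option" where
  "wend R a [] = Some a"
| "wend R a (Ar e # w) = (if e \<in> Es R \<and> src R e = a then wend R (tgt R e) w else None)"
| "wend R a (El v x g # w) =
     (if v = a \<and> x \<in> GV R v \<and> g \<in> carrier (Gfac R v x) then wend R a w else None)"

text \<open>Defining relations: those of each G_v (graph product presentation),
 e e-bar = 1, and iota_e(g) e = e iota_{e-bar}(g) (on generators of G_e).\<close>
definition gd_rel :: "('v,'e,'x,'y,'g) rag \<Rightarrow> ('v,'e,'x,'g) letter list \<Rightarrow> ('v,'e,'x,'g) letter list \<Rightarrow> bool" where
  "gd_rel R l r \<longleftrightarrow>
     (\<exists>v x g h. l = [El v x g, El v x h] \<and> r = [El v x (g \<otimes>\<^bsub>Gfac R v x\<^esub> h)])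
   \<or> (\<exists>v x. l = [El v x \<one>\<^bsub>Gfac R v x\<^esub>] \<and> r = [])
   \<or> (\<exists>v x y g h. Gadj R v x y \<and> l = [El v x g, El v y h] \<and> r = [El v y h, El v x g])
   \<or> (\<exists>e. l = [Ar e, Ar (rv R e)] \<and> r = [])
   \<or> (\<exists>e y h. e \<in> Es R \<and> y \<in> EV R e \<and> h \<in> carrier (Efac R e y) \<and>
        l = [El (src R e) (emb R e y) (emb_iso R e y h), Ar e] \<and>
        r = [Ar e, El (tgt R e) (emb R (rv R e) y) (emb_iso R (rv R e) y h)])"

inductive gd_eq :: "('v,'e,'x,'y,'g) rag \<Rightarrow> 'v \<Rightarrow> ('v,'e,'x,'g) letter list \<Rightarrow> ('v,'e,'x,'g) letter list \<Rightarrow> bool"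
  for R a where
  gd_refl: "wend R a w \<noteq> None \<Longrightarrow> gd_eq R a w w"
| gd_step: "gd_rel R l r \<Longrightarrow> wend R a (u @ l @ w) \<noteq> None \<Longrightarrow> wend R a (u @ r @ w) \<noteq> None
            \<Longrightarrow> gd_eq R a (u @ l @ w) (u @ r @ w)"
| gd_sym: "gd_eq R a w w' \<Longrightarrow> gd_eq R a w' w"
| gd_trans: "gd_eq R a w w' \<Longrightarrow> gd_eq R a w' w'' \<Longrightarrow> gd_eq R a w w''"

text \<open>Morphisms of the fundamental groupoid with initial object a.\<close>
definition gd_class where "gd_class R a w = {w'. gd_eq R a w w'}"

definition Xverts where "Xverts R \<omega> = {gd_class R \<omega> w | w. wend R \<omega> w \<noteq> None}"

definition gen :: "('v,'e,'x,'y,'g) rag \<Rightarrow> 'v \<Rightarrow> ('v,'e,'x,'g) letter \<Rightarrow> bool" where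
  "gen R a s \<longleftrightarrow> (\<exists>e. s = Ar e \<and> e \<in> Es R \<and> src R e = a)
     \<or> (\<exists>x g. s = El a x g \<and> x \<in> GV R a \<and> g \<in> carrier (Gfac R a x) \<and> g \<noteq> \<one>\<^bsub>Gfac R a x\<^esub>)"

definition Xadj where
  "Xadj R \<omega> p q \<longleftrightarrow> (\<exists>w a s. wend R \<omega> w = Some a \<and> gen R a s \<and>
      ((p = gd_class R \<omega> w \<and> q = gd_class R \<omega> (w @ [s])) \<or>
       (q = gd_class R \<omega> w \<and> p = gd_class R \<omega> (w @ [s]))))"

definition Xedges where "Xedges R \<omega> = {{p, q} | p q. Xadj R \<omega> p q}"

definition edge_factor_label where
  "edge_factor_label R \<omega> \<epsilon> u x \<longleftrightarrow> (\<exists>w g. wend R \<omega> w = Some u \<and> x \<in> GV R u \<and>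
      g \<in> carrier (Gfac R u x) \<and> g \<noteq> \<one>\<^bsub>Gfac R u x\<^esub> \<and>
      \<epsilon> = {gd_class R \<omega> w, gd_class R \<omega> (w @ [El u x g])})"

definition hyp_rel where
  "hyp_rel R \<omega> = {(\<epsilon>1, \<epsilon>2). \<epsilon>1 \<in> Xedges R \<omega> \<and> \<epsilon>2 \<in> Xedges R \<omega> \<and>
     ((\<exists>a b c. Xadj R \<omega> a b \<and> Xadj R \<omega> b c \<and> Xadj R \<omega> a c \<and>
               \<epsilon>1 \<subseteq> {a,b,c} \<and> \<epsilon>2 \<subseteq> {a,b,c})
    \<or> (\<exists>a b c d. distinct [a,b,c,d] \<and> Xadj R \<omega> a b \<and> Xadj R \<omega> b c \<and> Xadj R \<omega> c d \<and>
               Xadj R \<omega> d a \<and> \<not> Xadj R \<omega> a c \<and> \<not> Xadj R \<omega> b d \<and>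
               {\<epsilon>1, \<epsilon>2} = {{a,b},{c,d}}))}"

definition same_hyperplane where
  "same_hyperplane R \<omega> \<epsilon> \<epsilon>' \<longleftrightarrow> (\<epsilon>, \<epsilon>') \<in> (hyp_rel R \<omega>)\<^sup>*"

end

theory Submission imports Defs begin

text \<open>Following a hyperplane of X means passing through triangles and squares. A triangle
  through an edge labelled by a factor A carries the label A on all its sides. In a square, the
  side opposite such an edge is labelled either by A again or, when the two remaining sides are an
  arrow f and its reverse, by the factor into which the edge group of f carries A, that is, by
  phi_f(A). Chaining these steps gives gamma.

  Which words of the groupoid span triangles and squares is decided by invariants of its
  relations: the terminus, the signed number of occurrences of each arrow, the parity of the
  number of arrows, and an action of the groupoid on states, a state being a reduced path followed
  by an element of a factor at its end. A nontrivial factor letter moves the probe state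
  ([], x, 1) exactly when it belongs to the factor x, and this identifies the labels.\<close>

section \<open>Graph products\<close>

lemma gp_word_simps [simp]:
  "gp_word I G []"
  "gp_word I G (a # w) \<longleftrightarrow> fst a \<in> I \<and> snd a \<in> carrier (G (fst a)) \<and> gp_word I G w"
  "gp_word I G (u @ v) \<longleftrightarrow> gp_word I G u \<and> gp_word I G v"
  unfolding gp_word_def by (auto split: prod.splits)

lemma gp_class_eq_iff:
  assumes "gp_word I G w"
  shows "gp_class I adj G w = gp_class I adj G w' \<longleftrightarrow> gp_eq I adj G w w'"
proof
  assume "gp_class I adj G w = gp_class I adj G w'"
  moreover have "w \<in> gp_class I adj G w"
    using assms by (simp add: gp_class_def gp_refl)
  ultimately show "gp_eq I adj G w w'"
    by (simp add: gp_class_def gp_sym)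
qed (auto simp: gp_class_def intro: gp_trans gp_sym)

definition map_filter_word ::
    "('i \<Rightarrow> bool) \<Rightarrow> ('i \<Rightarrow> 'j) \<Rightarrow> ('i \<Rightarrow> 'g \<Rightarrow> 'h) \<Rightarrow> ('i \<times> 'g) list \<Rightarrow> ('j \<times> 'h) list" where
  "map_filter_word P f m w = map (\<lambda>(i,g). (f i, m i g)) (filter (\<lambda>ig. P (fst ig)) w)"

context
  fixes I :: "'i set" and adj :: "'i \<Rightarrow> 'i \<Rightarrow> bool" and G :: "'i \<Rightarrow> 'g monoid"
    and J :: "'j set" and adjJ :: "'j \<Rightarrow> 'j \<Rightarrow> bool" and H :: "'j \<Rightarrow> 'h monoid"
    and P :: "'i \<Rightarrow> bool" and f :: "'i \<Rightarrow> 'j" and m :: "'i \<Rightarrow> 'g \<Rightarrow> 'h"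
  assumes map_vertex: "\<And>i. i \<in> I \<Longrightarrow> P i \<Longrightarrow> f i \<in> J"
    and map_hom: "\<And>i. i \<in> I \<Longrightarrow> P i \<Longrightarrow> m i \<in> hom (G i) (H (f i))"
    and map_one: "\<And>i. i \<in> I \<Longrightarrow> P i \<Longrightarrow> m i \<one>\<^bsub>G i\<^esub> = \<one>\<^bsub>H (f i)\<^esub>"
    and map_adj: "\<And>i j. adj i j \<Longrightarrow> i \<in> I \<Longrightarrow> j \<in> I \<Longrightarrow> P i \<Longrightarrow> P j \<Longrightarrow> adjJ (f i) (f j)"
begin

lemma gp_word_map_filter_word: "gp_word I G w \<Longrightarrow> gp_word J H (map_filter_word P f m w)"
  by (induction w) (auto simp: map_filter_word_def map_vertex intro: hom_in_carrier[OF map_hom])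

lemma gp_move_map_filter_word:
  assumes move: "gp_move adj G l r" and l: "gp_word I G l"
  shows "map_filter_word P f m l = map_filter_word P f m r \<or>
    gp_move adjJ H (map_filter_word P f m l) (map_filter_word P f m r)"
  using move[unfolded gp_move_def]
proof (elim disjE exE conjE)
  fix i g h assume "l = [(i, g), (i, h)]" and "r = [(i, g \<otimes>\<^bsub>G i\<^esub> h)]"
  with l show ?thesis
    by (cases "P i") (auto simp: map_filter_word_def gp_move_def hom_mult[OF map_hom])
next
  fix i assume "l = [(i, \<one>\<^bsub>G i\<^esub>)]" and "r = []"
  with l show ?thesis
    by (auto simp: map_filter_word_def gp_move_def map_one)
next
  fix i j g h assume "adj i j" and "l = [(i, g), (j, h)]" and "r = [(j, h), (i, g)]"
  with l show ?thesis
    by (auto simp: map_filter_word_def gp_move_def map_adj)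
qed

lemma gp_eq_map_filter_word:
  "gp_eq I adj G w w' \<Longrightarrow> gp_eq J adjJ H (map_filter_word P f m w) (map_filter_word P f m w')"
proof (induction rule: gp_eq.induct)
  case (gp_refl w)
  then show ?case by (simp add: gp_eq.gp_refl gp_word_map_filter_word)
next
  case (gp_step l r u w)
  have words: "gp_word J H (map_filter_word P f m (u @ l @ w))"
    "gp_word J H (map_filter_word P f m (u @ r @ w))"
    using gp_step.hyps(2,3) by (simp_all add: gp_word_map_filter_word)
  have "map_filter_word P f m l = map_filter_word P f m r \<or>
      gp_move adjJ H (map_filter_word P f m l) (map_filter_word P f m r)"
    using gp_step.hyps by (intro gp_move_map_filter_word) auto
  then show ?case
  proof
    assume "map_filter_word P f m l = map_filter_word P f m r"
    then show ?thesis
      using words(1) by (simp add: map_filter_word_def gp_eq.gp_refl)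
  next
    assume "gp_move adjJ H (map_filter_word P f m l) (map_filter_word P f m r)"
    from gp_eq.gp_step[OF this, of J] words show ?thesis
      by (simp add: map_filter_word_def)
  qed
qed (blast intro: gp_eq.gp_sym gp_eq.gp_trans)+

end

section \<open>Graphical embeddings and the maps phi\<close>

locale right_angled_gog =
  fixes R :: "('v,'e,'x,'y,'g) rag"
  assumes rag_gog: "rag_gog R"
begin

lemma arrow_simps [simp]:
  assumes "e \<in> Es R"
  shows "rv R e \<in> Es R" "rv R (rv R e) = e" "src R e \<in> Vs R" "tgt R e \<in> Vs R"
    "src R (rv R e) = tgt R e" "tgt R (rv R e) = src R e"
    "EV R (rv R e) = EV R e" "Eadj R (rv R e) = Eadj R e" "Efac R (rv R e) = Efac R e"
  using rag_gog assms unfolding rag_gog_def by (auto simp del: opath.simps)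

lemma rv_neq: "e \<in> Es R \<Longrightarrow> rv R e \<noteq> e"
  using rag_gog unfolding rag_gog_def by blast

lemma inj_on_emb: "e \<in> Es R \<Longrightarrow> inj_on (emb R e) (EV R e)"
  using rag_gog unfolding rag_gog_def by blast

lemma emb_in_GV: "e \<in> Es R \<Longrightarrow> y \<in> EV R e \<Longrightarrow> emb R e y \<in> GV R (src R e)"
  using rag_gog unfolding rag_gog_def by blast

lemma Eadj_iff_Gadj:
  "e \<in> Es R \<Longrightarrow> y \<in> EV R e \<Longrightarrow> y' \<in> EV R e \<Longrightarrow>
     Eadj R e y y' \<longleftrightarrow> Gadj R (src R e) (emb R e y) (emb R e y')"
  using rag_gog unfolding rag_gog_def by blast

lemma emb_iso_iso:
  "e \<in> Es R \<Longrightarrow> y \<in> EV R e \<Longrightarrow> emb_iso R e y \<in> iso (Efac R e y) (Gfac R (src R e) (emb R e y))"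
  using rag_gog unfolding rag_gog_def by blast

lemma Gadj_neq: "v \<in> Vs R \<Longrightarrow> Gadj R v x x' \<Longrightarrow> x \<noteq> x'"
  using rag_gog unfolding rag_gog_def simplicial_def by blast

lemma group_Gfac: "v \<in> Vs R \<Longrightarrow> x \<in> GV R v \<Longrightarrow> group (Gfac R v x)"
  using rag_gog unfolding rag_gog_def nontriv_groups_def by blast

lemma group_Efac: "e \<in> Es R \<Longrightarrow> y \<in> EV R e \<Longrightarrow> group (Efac R e y)"
  using rag_gog unfolding rag_gog_def nontriv_groups_def by blast

definition emb_inv :: "'e \<Rightarrow> 'x \<Rightarrow> 'y" where
  "emb_inv e = the_inv_into (EV R e) (emb R e)"

definition emb_iso_inv :: "'e \<Rightarrow> 'y \<Rightarrow> 'g \<Rightarrow> 'g" where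
  "emb_iso_inv e y = inv_into (carrier (Efac R e y)) (emb_iso R e y)"

definition transport :: "'e \<Rightarrow> 'y \<Rightarrow> 'g \<Rightarrow> 'g" where
  "transport e y = emb_iso R (rv R e) y \<circ> emb_iso_inv e y"

lemma emb_inv_emb: "e \<in> Es R \<Longrightarrow> y \<in> EV R e \<Longrightarrow> emb_inv e (emb R e y) = y"
  unfolding emb_inv_def by (simp add: inj_on_emb the_inv_into_f_f)

lemma emb_emb_inv:
  "e \<in> Es R \<Longrightarrow> x \<in> emb R e ` EV R e \<Longrightarrow> emb_inv e x \<in> EV R e \<and> emb R e (emb_inv e x) = x"
  using emb_inv_emb by auto

lemma emb_iso_inv_iso:
  "e \<in> Es R \<Longrightarrow> y \<in> EV R e \<Longrightarrow> emb_iso_inv e y \<in> iso (Gfac R (src R e) (emb R e y)) (Efac R e y)"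
  unfolding emb_iso_inv_def by (rule group.iso_set_sym[OF group_Efac emb_iso_iso])

lemma emb_iso_emb_iso_inv:
  assumes "e \<in> Es R" "y \<in> EV R e" "g \<in> carrier (Gfac R (src R e) (emb R e y))"
  shows "emb_iso R e y (emb_iso_inv e y g) = g"
  using emb_iso_iso[OF assms(1,2)] assms(3) unfolding emb_iso_inv_def iso_def
  by (auto intro: bij_betw_inv_into_right)

lemma emb_iso_inv_emb_iso:
  assumes "e \<in> Es R" "y \<in> EV R e" "h \<in> carrier (Efac R e y)"
  shows "emb_iso_inv e y (emb_iso R e y h) = h"
  using emb_iso_iso[OF assms(1,2)] assms(3) unfolding emb_iso_inv_def iso_def
  by (auto intro: bij_betw_inv_into_left)

lemma emb_iso_closed:
  "e \<in> Es R \<Longrightarrow> y \<in> EV R e \<Longrightarrow> h \<in> carrier (Efac R e y) \<Longrightarrow>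
     emb_iso R e y h \<in> carrier (Gfac R (src R e) (emb R e y))"
  by (rule hom_in_carrier[OF iso_imp_homomorphism[OF emb_iso_iso]])

lemma emb_iso_inv_closed:
  "e \<in> Es R \<Longrightarrow> y \<in> EV R e \<Longrightarrow> g \<in> carrier (Gfac R (src R e) (emb R e y)) \<Longrightarrow>
     emb_iso_inv e y g \<in> carrier (Efac R e y)"
  by (rule hom_in_carrier[OF iso_imp_homomorphism[OF emb_iso_inv_iso]])

lemma transport_iso:
  assumes "e \<in> Es R" "y \<in> EV R e"
  shows "transport e y \<in> iso (Gfac R (src R e) (emb R e y)) (Gfac R (tgt R e) (emb R (rv R e) y))"
proof -
  have "emb_iso R (rv R e) y \<in> iso (Efac R e y) (Gfac R (tgt R e) (emb R (rv R e) y))"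
    using emb_iso_iso[of "rv R e" y] assms by simp
  then show ?thesis
    unfolding transport_def by (rule iso_set_trans[OF emb_iso_inv_iso[OF assms]])
qed

lemma transport_transport:
  assumes "e \<in> Es R" "y \<in> EV R e" "\<alpha> \<in> carrier (Gfac R (src R e) (emb R e y))"
  shows "transport (rv R e) y (transport e y \<alpha>) = \<alpha>"
  using assms emb_iso_inv_closed[OF assms]
  by (simp add: transport_def emb_iso_inv_emb_iso emb_iso_emb_iso_inv)

lemma transport_closed:
  "e \<in> Es R \<Longrightarrow> y \<in> EV R e \<Longrightarrow> \<alpha> \<in> carrier (Gfac R (src R e) (emb R e y)) \<Longrightarrow>
     transport e y \<alpha> \<in> carrier (Gfac R (tgt R e) (emb R (rv R e) y))"
  by (rule hom_in_carrier[OF iso_imp_homomorphism[OF transport_iso]])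

lemma transport_emb_iso:
  "e \<in> Es R \<Longrightarrow> y \<in> EV R e \<Longrightarrow> h \<in> carrier (Efac R e y) \<Longrightarrow>
     transport e y (emb_iso R e y h) = emb_iso R (rv R e) y h"
  by (simp add: transport_def emb_iso_inv_emb_iso)

definition iota_word :: "'e \<Rightarrow> ('y \<times> 'g) list \<Rightarrow> ('x \<times> 'g) list" where
  "iota_word e = map_filter_word (\<lambda>_. True) (emb R e) (emb_iso R e)"

definition restrict_word :: "'e \<Rightarrow> ('x \<times> 'g) list \<Rightarrow> ('y \<times> 'g) list" where
  "restrict_word e =
     map_filter_word (\<lambda>x. x \<in> emb R e ` EV R e) (emb_inv e) (\<lambda>x. emb_iso_inv e (emb_inv e x))"

abbreviation Eclass :: "'e \<Rightarrow> ('y \<times> 'g) list \<Rightarrow> ('y \<times> 'g) list set" where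
  "Eclass e \<equiv> gp_class (EV R e) (Eadj R e) (Efac R e)"

abbreviation Vclass :: "'v \<Rightarrow> ('x \<times> 'g) list \<Rightarrow> ('x \<times> 'g) list set" where
  "Vclass v \<equiv> gp_class (GV R v) (Gadj R v) (Gfac R v)"

lemma gp_eq_iota_word:
  assumes e: "e \<in> Es R" and eq: "gp_eq (EV R e) (Eadj R e) (Efac R e) w w'"
  shows "gp_eq (GV R (src R e)) (Gadj R (src R e)) (Gfac R (src R e)) (iota_word e w) (iota_word e w')"
  unfolding iota_word_def
  by (rule gp_eq_map_filter_word[OF _ _ _ _ eq])
    (use e in \<open>simp_all add: emb_in_GV iso_imp_homomorphism emb_iso_iso hom_one group_Efac
      group_Gfac Eadj_iff_Gadj\<close>)

lemma gp_eq_restrict_word: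
  assumes e: "e \<in> Es R" and eq: "gp_eq (GV R (src R e)) (Gadj R (src R e)) (Gfac R (src R e)) w w'"
  shows "gp_eq (EV R e) (Eadj R e) (Efac R e) (restrict_word e w) (restrict_word e w')"
  unfolding restrict_word_def
proof (rule gp_eq_map_filter_word[OF _ _ _ _ eq])
  fix x assume "x \<in> GV R (src R e)" and x: "x \<in> emb R e ` EV R e"
  then have y: "emb_inv e x \<in> EV R e" and x_eq: "emb R e (emb_inv e x) = x"
    using emb_emb_inv[OF e] by auto
  show "emb_inv e x \<in> EV R e" by (fact y)
  show "emb_iso_inv e (emb_inv e x) \<in> hom (Gfac R (src R e) x) (Efac R e (emb_inv e x))"
    using iso_imp_homomorphism[OF emb_iso_inv_iso[OF e y]] x_eq by simp
  show "emb_iso_inv e (emb_inv e x) \<one>\<^bsub>Gfac R (src R e) x\<^esub> = \<one>\<^bsub>Efac R e (emb_inv e x)\<^esub>"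
    using hom_one[OF iso_imp_homomorphism[OF emb_iso_inv_iso[OF e y]]]
      group_Gfac[OF _ emb_in_GV[OF e y]] group_Efac[OF e y] e x_eq
    by simp
next
  fix x x' assume "Gadj R (src R e) x x'" "x \<in> emb R e ` EV R e" "x' \<in> emb R e ` EV R e"
  then show "Eadj R e (emb_inv e x) (emb_inv e x')"
    using emb_emb_inv[OF e] Eadj_iff_Gadj[OF e] by metis
qed

lemma restrict_iota_word:
  assumes e: "e \<in> Es R"
  shows "gp_word (EV R e) (Efac R e) w \<Longrightarrow> restrict_word e (iota_word e w) = w"
proof (induction w)
  case (Cons a w)
  then have "fst a \<in> EV R e" "snd a \<in> carrier (Efac R e (fst a))" by auto
  with Cons e show ?case
    by (cases a) (auto simp: restrict_word_def iota_word_def map_filter_word_def emb_inv_emb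
        emb_iso_inv_emb_iso)
qed (simp add: restrict_word_def iota_word_def map_filter_word_def)

lemma gp_word_iota_word:
  "e \<in> Es R \<Longrightarrow> gp_word (EV R e) (Efac R e) w \<Longrightarrow>
     gp_word (GV R (src R e)) (Gfac R (src R e)) (iota_word e w)"
  by (induction w) (auto simp: iota_word_def map_filter_word_def emb_in_GV emb_iso_closed)

lemma iota_Eclass:
  assumes e: "e \<in> Es R" and w: "gp_word (EV R e) (Efac R e) w"
  shows "iota R e (Eclass e w) = Vclass (src R e) (iota_word e w)"
proof -
  have "w \<in> Eclass e w" using w by (simp add: gp_class_def gp_refl)
  then have "(SOME w'. w' \<in> Eclass e w) \<in> Eclass e w" by (rule someI)
  then have "gp_eq (EV R e) (Eadj R e) (Efac R e) w (SOME w'. w' \<in> Eclass e w)"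
    by (simp add: gp_class_def)
  then have "Vclass (src R e) (iota_word e w) = Vclass (src R e) (iota_word e (SOME w'. w' \<in> Eclass e w))"
    using gp_class_eq_iff gp_word_iota_word[OF e w] gp_eq_iota_word[OF e] by blast
  then show ?thesis unfolding iota_def iota_word_def map_filter_word_def by simp
qed

abbreviation Efactor :: "'e \<Rightarrow> 'y \<Rightarrow> ('y \<times> 'g) list set set" where
  "Efactor e \<equiv> gp_factor (EV R e) (Eadj R e) (Efac R e)"

lemma iota_image_Efactor:
  assumes e: "e \<in> Es R" and y: "y \<in> EV R e"
  shows "iota R e ` Efactor e y = Afac R (src R e) (emb R e y)"
proof -
  have iota_letter: "iota R e (Eclass e [(y,h)]) = Vclass (src R e) [(emb R e y, emb_iso R e y h)]"
    if "h \<in> carrier (Efac R e y)" for h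
    using iota_Eclass[OF e] that y by (simp add: iota_word_def map_filter_word_def)
  show ?thesis
  proof (intro equalityI subsetI)
    fix c assume "c \<in> iota R e ` Efactor e y"
    then obtain h where "h \<in> carrier (Efac R e y)" "c = iota R e (Eclass e [(y,h)])"
      unfolding gp_factor_def by blast
    then show "c \<in> Afac R (src R e) (emb R e y)"
      unfolding Afac_def gp_factor_def using iota_letter emb_iso_closed[OF e y] by blast
  next
    fix c assume "c \<in> Afac R (src R e) (emb R e y)"
    then obtain g where g: "g \<in> carrier (Gfac R (src R e) (emb R e y))"
      and c: "c = Vclass (src R e) [(emb R e y, g)]"
      unfolding Afac_def gp_factor_def by blast
    have "c = iota R e (Eclass e [(y, emb_iso_inv e y g)])"
      using c iota_letter[OF emb_iso_inv_closed[OF e y g]] emb_iso_emb_iso_inv[OF e y g] by simp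
    then show "c \<in> iota R e ` Efactor e y"
      unfolding gp_factor_def using emb_iso_inv_closed[OF e y g] by blast
  qed
qed

text \<open>Restricting words back to G_e shows that only the letters of the factor y are mapped
  into the factor emb e y.\<close>

lemma iota_preimage_Afac:
  assumes e: "e \<in> Es R" and y: "y \<in> EV R e"
  shows "{c \<in> Ge R e. iota R e c \<in> Afac R (src R e) (emb R e y)} = Efactor e y"
proof (intro equalityI subsetI)
  fix c assume "c \<in> {c \<in> Ge R e. iota R e c \<in> Afac R (src R e) (emb R e y)}"
  then obtain w g where w: "gp_word (EV R e) (Efac R e) w" and c: "c = Eclass e w"
    and g: "g \<in> carrier (Gfac R (src R e) (emb R e y))"
    and class_eq: "Vclass (src R e) (iota_word e w) = Vclass (src R e) [(emb R e y, g)]"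
    unfolding Ge_def gp_elems_def Afac_def gp_factor_def using iota_Eclass[OF e] by force
  have "gp_eq (GV R (src R e)) (Gadj R (src R e)) (Gfac R (src R e)) (iota_word e w) [(emb R e y, g)]"
    using class_eq gp_class_eq_iff gp_word_iota_word[OF e w] by blast
  from gp_eq_restrict_word[OF e this]
  have "gp_eq (EV R e) (Eadj R e) (Efac R e) w [(y, emb_iso_inv e y g)]"
    using restrict_iota_word[OF e w] y e
    by (simp add: restrict_word_def map_filter_word_def emb_inv_emb)
  then have "c = Eclass e [(y, emb_iso_inv e y g)]"
    using c gp_class_eq_iff w by blast
  then show "c \<in> Efactor e y"
    unfolding gp_factor_def using emb_iso_inv_closed[OF e y g] by blast
next
  fix c assume c: "c \<in> Efactor e y"
  then have "c \<in> Ge R e"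
    unfolding gp_factor_def Ge_def gp_elems_def using y by fastforce
  with c show "c \<in> {c \<in> Ge R e. iota R e c \<in> Afac R (src R e) (emb R e y)}"
    using iota_image_Efactor[OF e y] by blast
qed

lemma phi_e_Afac:
  assumes e: "e \<in> Es R" and y: "y \<in> EV R e"
  shows "phi_e R e (Afac R (src R e) (emb R e y)) = Afac R (tgt R e) (emb R (rv R e) y)"
proof -
  have "Efactor e y \<subseteq> Ge R e"
    unfolding gp_factor_def Ge_def gp_elems_def using y by fastforce
  then have "Afac R (src R e) (emb R e y) \<subseteq> iota R e ` Ge R e"
    using iota_image_Efactor[OF e y] by blast
  moreover have "iota R (rv R e) ` Efactor e y = Afac R (tgt R e) (emb R (rv R e) y)"
    using iota_image_Efactor[of "rv R e" y] e y by simp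
  ultimately show ?thesis
    unfolding phi_e_def iota_preimage_Afac[OF e y] by simp
qed

end

definition factor_step :: "('v,'e,'x,'y,'g) rag \<Rightarrow> 'v \<times> 'x \<Rightarrow> 'v \<times> 'x \<Rightarrow> bool" where
  "factor_step R p p' \<longleftrightarrow>
     (\<exists>e\<in>Es R. \<exists>y\<in>EV R e. p = (src R e, emb R e y) \<and> p' = (tgt R e, emb R (rv R e) y))"

lemma opath_append: "opath R u (\<gamma> @ \<delta>) w \<longleftrightarrow> (\<exists>m. opath R u \<gamma> m \<and> opath R m \<delta> w)"
  by (induction \<gamma> arbitrary: u) auto

lemma (in right_angled_gog) factor_steps_imp_path:
  assumes "(factor_step R)\<^sup>*\<^sup>* (u, x) (v, y)"
  shows "\<exists>\<gamma>. opath R u \<gamma> v \<and> phi_path R \<gamma> (Afac R u x) = Afac R v y"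
  using assms
proof (induction rule: rtranclp_induct2)
  case refl
  show ?case by (rule exI[of _ "[]"]) (simp add: phi_path_def)
next
  case (step z X z' X')
  obtain \<gamma> where \<gamma>: "opath R u \<gamma> z" "phi_path R \<gamma> (Afac R u x) = Afac R z X"
    using step.IH by blast
  obtain e y where e: "e \<in> Es R" "y \<in> EV R e" "(z, X) = (src R e, emb R e y)"
    "(z', X') = (tgt R e, emb R (rv R e) y)"
    using step.hyps(2) unfolding factor_step_def by blast
  have "opath R u (\<gamma> @ [e]) z'"
    using \<gamma>(1) e by (auto simp: opath_append)
  moreover have "phi_path R (\<gamma> @ [e]) (Afac R u x) = Afac R z' X'"
    using \<gamma>(2) e phi_e_Afac[OF e(1,2)] by (simp add: phi_path_def)
  ultimately show ?case by blast
qed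

section \<open>Words in the fundamental groupoid\<close>

lemma wend_append:
  "wend R a (u @ w) = (case wend R a u of None \<Rightarrow> None | Some b \<Rightarrow> wend R b w)"
proof (induction u arbitrary: a)
  case (Cons s u)
  then show ?case by (cases s) auto
qed simp

lemma wend_append_Some: "wend R a u = Some b \<Longrightarrow> wend R a (u @ w) = wend R b w"
  by (simp add: wend_append)

lemma wend_append_not_None: "wend R a (u @ w) \<noteq> None \<Longrightarrow> wend R a u \<noteq> None"
  by (auto simp: wend_append split: option.splits)

fun num_arrows :: "('v,'e,'x,'g) letter list \<Rightarrow> nat" where
  "num_arrows [] = 0"
| "num_arrows (Ar e # w) = Suc (num_arrows w)"
| "num_arrows (El v x g # w) = num_arrows w"

lemma num_arrows_append: "num_arrows (u @ w) = num_arrows u + num_arrows w"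
  by (induction u rule: num_arrows.induct) auto

context right_angled_gog
begin

lemma wend_in_Vs: "wend R a w = Some b \<Longrightarrow> a \<in> Vs R \<Longrightarrow> b \<in> Vs R"
proof (induction w arbitrary: a)
  case (Cons s w)
  then show ?case by (cases s) (auto split: if_splits)
qed simp

definition signed_arrow :: "'e \<Rightarrow> 'e \<Rightarrow> int" where
  "signed_arrow e f = (if f = e then 1 else 0) - (if f = rv R e then 1 else 0)"

fun arrow_count :: "('v,'e,'x,'g) letter list \<Rightarrow> 'e \<Rightarrow> int" where
  "arrow_count [] f = 0"
| "arrow_count (Ar e # w) f = signed_arrow e f + arrow_count w f"
| "arrow_count (El v x g # w) f = arrow_count w f"

lemma arrow_count_append: "arrow_count (u @ w) f = arrow_count u f + arrow_count w f"
  by (induction u f rule: arrow_count.induct) auto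

lemma signed_arrow_inj:
  assumes "e \<in> Es R" "f \<in> Es R" "signed_arrow e = signed_arrow f"
  shows "e = f"
proof -
  have "signed_arrow e e = 1"
    using rv_neq[OF assms(1)] by (simp add: signed_arrow_def)
  then have "signed_arrow f e = 1"
    by (simp add: assms(3))
  then show ?thesis by (auto simp: signed_arrow_def split: if_splits)
qed

lemma signed_arrow_cancel:
  assumes "e \<in> Es R" "f \<in> Es R" "\<And>g. signed_arrow e g + signed_arrow f g = 0"
  shows "f = rv R e"
proof -
  have "signed_arrow f e = -1"
    using assms(3)[of e] rv_neq[OF assms(1)] by (simp add: signed_arrow_def)
  then have "e = rv R f" by (auto simp: signed_arrow_def split: if_splits)
  then show ?thesis using assms(2) by simp
qed

lemma gd_rel_invariants:
  assumes "gd_rel R l r" "wend R b l \<noteq> None" "wend R b r \<noteq> None"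
  shows "wend R b l = wend R b r \<and> arrow_count l = arrow_count r \<and>
    even (num_arrows l) = even (num_arrows r)"
  using assms(1) unfolding gd_rel_def
proof (elim disjE exE conjE)
  fix e assume l: "l = [Ar e, Ar (rv R e)]" and r: "r = []"
  then have e: "e \<in> Es R" "src R e = b" using assms(2) by (auto split: if_splits)
  then have "arrow_count l = arrow_count r"
    using rv_neq[OF e(1)] l r by (auto simp: fun_eq_iff signed_arrow_def)
  then show ?thesis using l r e by auto
qed (use assms in \<open>auto split: if_splits\<close>)

lemma gd_eq_invariants:
  assumes "gd_eq R \<omega> w w'"
  shows "wend R \<omega> w = wend R \<omega> w' \<and> wend R \<omega> w \<noteq> None \<and> arrow_count w = arrow_count w' \<and>
    even (num_arrows w) = even (num_arrows w')"
  using assms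
proof (induction rule: gd_eq.induct)
  case (gd_step l r u w)
  obtain b where b: "wend R \<omega> u = Some b"
    using gd_step.hyps(2) by (auto simp: wend_append split: option.splits)
  then have "wend R b (l @ w) \<noteq> None" "wend R b (r @ w) \<noteq> None"
    using gd_step.hyps(2,3) by (simp_all add: wend_append_Some)
  then have "wend R b l = wend R b r \<and> arrow_count l = arrow_count r \<and>
      even (num_arrows l) = even (num_arrows r)"
    using gd_rel_invariants[OF gd_step.hyps(1)] wend_append_not_None by metis
  then show ?case
    using gd_step.hyps(2) b
    by (auto simp: wend_append arrow_count_append num_arrows_append fun_eq_iff)
next
  case (gd_sym w w')
  then show ?case by metis
next
  case (gd_trans w w' w'')
  then show ?case by metis
qed simp

lemma gd_eq_append:
  assumes "gd_eq R \<omega> w w'" "wend R \<omega> (w @ z) \<noteq> None"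
  shows "gd_eq R \<omega> (w @ z) (w' @ z)"
  using assms
proof (induction arbitrary: z rule: gd_eq.induct)
  case (gd_refl w)
  then show ?case by (simp add: gd_eq.gd_refl)
next
  case (gd_step l r u w)
  have "wend R \<omega> (u @ l @ w) = wend R \<omega> (u @ r @ w)"
    using gd_eq_invariants[OF gd_eq.gd_step[OF gd_step.hyps]] by simp
  then have "wend R \<omega> (u @ r @ (w @ z)) \<noteq> None"
    using gd_step.prems wend_append[of R \<omega> "u @ l @ w" z] wend_append[of R \<omega> "u @ r @ w" z] by simp
  then show ?case using gd_eq.gd_step[OF gd_step.hyps(1), of \<omega> u "w @ z"] gd_step.prems by simp
next
  case (gd_sym w w')
  have "wend R \<omega> w = wend R \<omega> w'" using gd_eq_invariants[OF gd_sym.hyps] by simp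
  then show ?case
    using gd_sym wend_append[of R \<omega> w z] wend_append[of R \<omega> w' z] by (simp add: gd_eq.gd_sym)
next
  case (gd_trans w w' w'')
  have "wend R \<omega> w = wend R \<omega> w'" using gd_eq_invariants[OF gd_trans.hyps(1)] by simp
  then show ?case
    using gd_trans wend_append[of R \<omega> w z] wend_append[of R \<omega> w' z]
    by (metis gd_eq.gd_trans)
qed

lemma gd_class_eq_iff:
  assumes "wend R \<omega> w \<noteq> None"
  shows "gd_class R \<omega> w = gd_class R \<omega> w' \<longleftrightarrow> gd_eq R \<omega> w w'"
proof
  assume "gd_class R \<omega> w = gd_class R \<omega> w'"
  moreover have "w \<in> gd_class R \<omega> w" using assms by (simp add: gd_class_def gd_refl)
  ultimately show "gd_eq R \<omega> w w'" by (simp add: gd_class_def gd_sym)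
qed (auto simp: gd_class_def intro: gd_trans gd_sym)

lemma gd_eq_merge:
  assumes w: "wend R \<omega> w = Some a" and a: "a \<in> Vs R" and x: "x \<in> GV R a"
    and g: "g \<in> carrier (Gfac R a x)" and h: "h \<in> carrier (Gfac R a x)"
  shows "gd_eq R \<omega> (w @ [El a x g, El a x h]) (w @ [El a x (g \<otimes>\<^bsub>Gfac R a x\<^esub> h)])"
proof -
  have "gd_rel R [El a x g, El a x h] [El a x (g \<otimes>\<^bsub>Gfac R a x\<^esub> h)]"
    unfolding gd_rel_def by blast
  from gd_step[OF this, of \<omega> w "[]"] show ?thesis
    using w x g h group.subgroup_self[OF group_Gfac[OF a x]]
    by (simp add: wend_append_Some subgroup.m_closed)
qed

lemma gd_eq_one:
  assumes w: "wend R \<omega> w = Some a" and a: "a \<in> Vs R" and x: "x \<in> GV R a"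
  shows "gd_eq R \<omega> (w @ [El a x \<one>\<^bsub>Gfac R a x\<^esub>]) w"
proof -
  have "gd_rel R [El a x \<one>\<^bsub>Gfac R a x\<^esub>] []" unfolding gd_rel_def by blast
  from gd_step[OF this, of \<omega> w "[]"] show ?thesis
    using w x group.is_monoid[OF group_Gfac[OF a x]] by (simp add: wend_append_Some monoid.one_closed)
qed

lemma gd_eq_arrow_rv:
  assumes w: "wend R \<omega> w = Some a" and e: "e \<in> Es R" "src R e = a"
  shows "gd_eq R \<omega> (w @ [Ar e, Ar (rv R e)]) w"
proof -
  have "gd_rel R [Ar e, Ar (rv R e)] []" unfolding gd_rel_def by blast
  from gd_step[OF this, of \<omega> w "[]"] show ?thesis using w e by (simp add: wend_append_Some)
qed

section \<open>An action of the fundamental groupoid\<close>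

text \<open>The condition on the last arrow of a state makes it a normal form: an element carried by
  that edge group could be pushed back across the arrow.\<close>

fun reduced :: "'e list \<Rightarrow> bool" where
  "reduced [] = True"
| "reduced [e] = True"
| "reduced (e # f # q) = (f \<noteq> rv R e \<and> reduced (f # q))"

definition states :: "'v \<Rightarrow> ('e list \<times> 'x \<times> 'g) set" where
  "states v = {(q,x,\<alpha>). \<exists>z. opath R v q z \<and> reduced q \<and> x \<in> GV R z \<and> \<alpha> \<in> carrier (Gfac R z x) \<and>
       (q \<noteq> [] \<longrightarrow> x \<notin> emb R (rv R (last q)) ` EV R (last q))}"

fun act :: "('v,'e,'x,'g) letter \<Rightarrow> 'e list \<times> 'x \<times> 'g \<Rightarrow> 'e list \<times> 'x \<times> 'g" where
  "act (Ar e) (q,x,\<alpha>) =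
     (if q \<noteq> [] \<and> hd q = e then (tl q, x, \<alpha>)
      else if q = [] \<and> x \<in> emb R e ` EV R e
        then ([], emb R (rv R e) (emb_inv e x), transport e (emb_inv e x) \<alpha>)
      else (rv R e # q, x, \<alpha>))"
| "act (El v x' g) (q,x,\<alpha>) = (if q = [] \<and> x = x' then (q, x, \<alpha> \<otimes>\<^bsub>Gfac R v x'\<^esub> g) else (q,x,\<alpha>))"

definition act_word :: "('v,'e,'x,'g) letter list \<Rightarrow> 'e list \<times> 'x \<times> 'g \<Rightarrow> 'e list \<times> 'x \<times> 'g" where
  "act_word w = fold act w"

lemma act_word_simps [simp]:
  "act_word [] = id" "act_word (s # w) = act_word w \<circ> act s" "act_word (u @ w) = act_word w \<circ> act_word u"
  by (simp_all add: act_word_def)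

lemma statesE:
  assumes "(q,x,\<alpha>) \<in> states v"
  obtains z where "opath R v q z" "reduced q" "x \<in> GV R z" "\<alpha> \<in> carrier (Gfac R z x)"
    "q \<noteq> [] \<Longrightarrow> x \<notin> emb R (rv R (last q)) ` EV R (last q)"
  using assms unfolding states_def by blast

lemma states_base: "x \<in> GV R v \<Longrightarrow> \<alpha> \<in> carrier (Gfac R v x) \<Longrightarrow> ([], x, \<alpha>) \<in> states v"
  unfolding states_def by simp

lemma act_Ar_states:
  assumes e: "e \<in> Es R" and \<sigma>: "\<sigma> \<in> states (src R e)"
  shows "act (Ar e) \<sigma> \<in> states (tgt R e)"
proof -
  obtain q x \<alpha> where \<sigma>_eq: "\<sigma> = (q,x,\<alpha>)" by (cases \<sigma>)
  obtain z where path: "opath R (src R e) q z" and red: "reduced q" and x: "x \<in> GV R z"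
    and \<alpha>: "\<alpha> \<in> carrier (Gfac R z x)" and last: "q \<noteq> [] \<Longrightarrow> x \<notin> emb R (rv R (last q)) ` EV R (last q)"
    using \<sigma> \<sigma>_eq statesE by metis
  consider (pop) q' where "q = e # q'"
    | (cross) "q = []" "x \<in> emb R e ` EV R e"
    | (push) "q = [] \<longrightarrow> x \<notin> emb R e ` EV R e" "q \<noteq> [] \<longrightarrow> hd q \<noteq> e"
    by (cases q) auto
  then show ?thesis
  proof cases
    case pop
    with path red last x \<alpha> show ?thesis
      unfolding \<sigma>_eq states_def by (cases q') auto
  next
    case cross
    then have y: "emb_inv e x \<in> EV R e" "emb R e (emb_inv e x) = x" and z: "z = src R e"
      using emb_emb_inv[OF e] path by auto
    have "emb R (rv R e) (emb_inv e x) \<in> GV R (tgt R e)"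
      using emb_in_GV[of "rv R e"] e y by simp
    moreover have "transport e (emb_inv e x) \<alpha> \<in> carrier (Gfac R (tgt R e) (emb R (rv R e) (emb_inv e x)))"
      using transport_closed[OF e y(1)] \<alpha> y z by simp
    ultimately show ?thesis
      using cross by (simp add: \<sigma>_eq states_base)
  next
    case push
    have "opath R (tgt R e) (rv R e # q) z" "reduced (rv R e # q)"
      using path red push e by (cases q; auto)+
    moreover have "x \<notin> emb R (rv R (last (rv R e # q))) ` EV R (last (rv R e # q))"
      using last push e by auto
    moreover have "act (Ar e) \<sigma> = (rv R e # q, x, \<alpha>)"
      using push \<sigma>_eq by auto
    ultimately show ?thesis
      unfolding states_def using x \<alpha> by auto
  qed
qed

lemma act_El_states:
  assumes v: "v \<in> Vs R" and x': "x' \<in> GV R v" and g: "g \<in> carrier (Gfac R v x')"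
    and \<sigma>: "\<sigma> \<in> states v"
  shows "act (El v x' g) \<sigma> \<in> states v"
proof -
  obtain q x \<alpha> where \<sigma>_eq: "\<sigma> = (q,x,\<alpha>)" by (cases \<sigma>)
  show ?thesis
  proof (cases "q = [] \<and> x = x'")
    case True
    then have "\<alpha> \<in> carrier (Gfac R v x')"
      using \<sigma> \<sigma>_eq by (auto elim: statesE)
    then show ?thesis
      using True g x' group.subgroup_self[OF group_Gfac[OF v x']] \<sigma>_eq
      by (simp add: states_base subgroup.m_closed)
  qed (use \<sigma> \<sigma>_eq in auto)
qed

lemma act_states:
  assumes "v \<in> Vs R" "\<sigma> \<in> states v" "wend R v [s] = Some b"
  shows "act s \<sigma> \<in> states b"
  using assms by (cases s) (auto split: if_splits simp del: act.simps intro: act_Ar_states act_El_states)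

lemma act_word_states:
  "v \<in> Vs R \<Longrightarrow> \<sigma> \<in> states v \<Longrightarrow> wend R v w = Some b \<Longrightarrow> act_word w \<sigma> \<in> states b"
proof (induction w arbitrary: v \<sigma>)
  case (Cons s w)
  obtain c where c: "wend R v [s] = Some c" and w: "wend R c w = Some b"
    using Cons.prems(3) wend_append[of R v "[s]" w] by (auto split: option.splits)
  show ?case
    using Cons.IH[OF wend_in_Vs[OF c Cons.prems(1)] act_states[OF Cons.prems(1,2) c] w] by simp
qed simp

lemma act_El_other: "(\<And>\<beta>. \<rho> \<noteq> ([], x, \<beta>)) \<Longrightarrow> act (El v x g) \<rho> = \<rho>"
  by (cases \<rho>) auto

lemma act_Ar_rv:
  assumes e: "e \<in> Es R" and \<sigma>: "\<sigma> \<in> states (src R e)"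
  shows "act (Ar (rv R e)) (act (Ar e) \<sigma>) = \<sigma>"
proof -
  obtain q x \<alpha> where \<sigma>_eq: "\<sigma> = (q,x,\<alpha>)" by (cases \<sigma>)
  obtain z where path: "opath R (src R e) q z" and red: "reduced q" and \<alpha>: "\<alpha> \<in> carrier (Gfac R z x)"
    and last: "q \<noteq> [] \<Longrightarrow> x \<notin> emb R (rv R (last q)) ` EV R (last q)"
    using \<sigma> \<sigma>_eq statesE by metis
  consider (pop) q' where "q = e # q'"
    | (cross) "q = []" "x \<in> emb R e ` EV R e"
    | (push) "q = [] \<longrightarrow> x \<notin> emb R e ` EV R e" "q \<noteq> [] \<longrightarrow> hd q \<noteq> e"
    by (cases q) auto
  then show ?thesis
  proof cases
    case pop
    have "q' = [] \<longrightarrow> x \<notin> emb R (rv R e) ` EV R e" "q' \<noteq> [] \<longrightarrow> hd q' \<noteq> rv R e"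
      using last red pop e by (auto simp: neq_Nil_conv)
    then show ?thesis using pop \<sigma>_eq e by auto
  next
    case cross
    then have y: "emb_inv e x \<in> EV R e" "emb R e (emb_inv e x) = x" and z: "z = src R e"
      using emb_emb_inv[OF e] path by auto
    have "transport (rv R e) (emb_inv e x) (transport e (emb_inv e x) \<alpha>) = \<alpha>"
      using transport_transport[OF e y(1)] \<alpha> y z by simp
    then show ?thesis
      using cross \<sigma>_eq e y emb_inv_emb[of "rv R e" "emb_inv e x"] by auto
  next
    case push
    then show ?thesis using \<sigma>_eq e by auto
  qed
qed

lemma act_Ar_El_comm:
  assumes e: "e \<in> Es R" and y: "y \<in> EV R e" and h: "h \<in> carrier (Efac R e y)"
    and \<sigma>: "\<sigma> \<in> states (src R e)"
  shows "act (Ar e) (act (El (src R e) (emb R e y) (emb_iso R e y h)) \<sigma>)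
       = act (El (tgt R e) (emb R (rv R e) y) (emb_iso R (rv R e) y h)) (act (Ar e) \<sigma>)"
proof -
  obtain q x \<alpha> where \<sigma>_eq: "\<sigma> = (q,x,\<alpha>)" by (cases \<sigma>)
  obtain z where path: "opath R (src R e) q z" and \<alpha>: "\<alpha> \<in> carrier (Gfac R z x)"
    and last: "q \<noteq> [] \<Longrightarrow> x \<notin> emb R (rv R (last q)) ` EV R (last q)"
    using \<sigma> \<sigma>_eq statesE by metis
  show ?thesis
  proof (cases "q = [] \<and> x = emb R e y")
    case True
    then have "\<alpha> \<in> carrier (Gfac R (src R e) (emb R e y))" using path \<alpha> by simp
    then have "transport e y (\<alpha> \<otimes>\<^bsub>Gfac R (src R e) (emb R e y)\<^esub> emb_iso R e y h)
        = transport e y \<alpha> \<otimes>\<^bsub>Gfac R (tgt R e) (emb R (rv R e) y)\<^esub> emb_iso R (rv R e) y h"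
      using hom_mult[OF iso_imp_homomorphism[OF transport_iso[OF e y]]] emb_iso_closed[OF e y h]
        transport_emb_iso[OF e y h] by simp
    then show ?thesis using True \<sigma>_eq e y by (simp add: emb_inv_emb)
  next
    case False
    have "emb R (rv R e) (emb_inv e x) \<noteq> emb R (rv R e) y" if "q = []" "x \<in> emb R e ` EV R e"
    proof -
      have "emb_inv e x \<in> EV R e" "emb_inv e x \<noteq> y"
        using that False emb_emb_inv[OF e] by auto
      then show ?thesis
        using inj_on_emb[of "rv R e"] e y by (simp add: inj_on_eq_iff)
    qed
    moreover have "x \<noteq> emb R (rv R e) y" if "q = [e]"
      using last that y by auto
    ultimately have "act (Ar e) \<sigma> \<noteq> ([], emb R (rv R e) y, \<beta>)" for \<beta>
      using \<sigma>_eq by (cases q) auto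
    then show ?thesis
      using False \<sigma>_eq act_El_other by auto
  qed
qed

lemma act_El_merge:
  assumes v: "v \<in> Vs R" and x: "x \<in> GV R v" and g: "g \<in> carrier (Gfac R v x)"
    and h: "h \<in> carrier (Gfac R v x)" and \<sigma>: "\<sigma> \<in> states v"
  shows "act (El v x h) (act (El v x g) \<sigma>) = act (El v x (g \<otimes>\<^bsub>Gfac R v x\<^esub> h)) \<sigma>"
proof (cases \<sigma>)
  case (fields q x' \<alpha>)
  then have "q = [] \<Longrightarrow> \<alpha> \<in> carrier (Gfac R v x')" using \<sigma> by (auto elim: statesE)
  then show ?thesis
    using fields g h group.is_monoid[OF group_Gfac[OF v x]] by (auto simp: monoid.m_assoc)
qed

lemma act_El_one:
  assumes v: "v \<in> Vs R" and x: "x \<in> GV R v" and \<sigma>: "\<sigma> \<in> states v"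
  shows "act (El v x \<one>\<^bsub>Gfac R v x\<^esub>) \<sigma> = \<sigma>"
proof (cases \<sigma>)
  case (fields q x' \<alpha>)
  then have "q = [] \<Longrightarrow> \<alpha> \<in> carrier (Gfac R v x')" using \<sigma> by (auto elim: statesE)
  then show ?thesis
    using fields group.is_monoid[OF group_Gfac[OF v x]] by (auto simp: monoid.r_one)
qed

lemma act_El_swap:
  "v \<in> Vs R \<Longrightarrow> Gadj R v x x' \<Longrightarrow> act (El v x' h) (act (El v x g) \<sigma>) = act (El v x g) (act (El v x' h) \<sigma>)"
  using Gadj_neq by (cases \<sigma>) auto

lemma act_word_gd_rel:
  assumes rel: "gd_rel R l r" and v: "v \<in> Vs R" and l: "wend R v l \<noteq> None"
    and r: "wend R v r \<noteq> None" and \<sigma>: "\<sigma> \<in> states v"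
  shows "act_word l \<sigma> = act_word r \<sigma>"
  using rel[unfolded gd_rel_def]
proof (elim disjE exE conjE)
  fix v' x g h assume "l = [El v' x g, El v' x h]" "r = [El v' x (g \<otimes>\<^bsub>Gfac R v' x\<^esub> h)]"
  with l show ?thesis using act_El_merge[OF v _ _ _ \<sigma>] by (auto split: if_splits)
next
  fix v' x assume "l = [El v' x \<one>\<^bsub>Gfac R v' x\<^esub>]" "r = []"
  with l show ?thesis using act_El_one[OF v _ \<sigma>] by (auto split: if_splits)
next
  fix v' x x' g h assume adj: "Gadj R v' x x'" and lr: "l = [El v' x g, El v' x' h]" "r = [El v' x' h, El v' x g]"
  with l have "Gadj R v x x'" by (auto split: if_splits)
  then have "act (El v x' h) (act (El v x g) \<sigma>) = act (El v x g) (act (El v x' h) \<sigma>)"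
    by (rule act_El_swap[OF v])
  with l lr show ?thesis by (auto split: if_splits simp del: act.simps)
next
  fix e assume "l = [Ar e, Ar (rv R e)]" "r = []"
  with l show ?thesis using act_Ar_rv \<sigma> by (auto split: if_splits simp del: act.simps)
next
  fix e y h assume e: "e \<in> Es R" "y \<in> EV R e" "h \<in> carrier (Efac R e y)"
    and lr: "l = [El (src R e) (emb R e y) (emb_iso R e y h), Ar e]"
      "r = [Ar e, El (tgt R e) (emb R (rv R e) y) (emb_iso R (rv R e) y h)]"
  with l have "\<sigma> \<in> states (src R e)" using \<sigma> by (auto split: if_splits)
  with lr show ?thesis using act_Ar_El_comm[OF e] by simp
qed

lemma act_word_gd_eq:
  assumes "gd_eq R \<omega> w w'" and "\<omega> \<in> Vs R" and "\<sigma> \<in> states \<omega>"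
  shows "act_word w \<sigma> = act_word w' \<sigma>"
  using assms
proof (induction arbitrary: \<sigma> rule: gd_eq.induct)
  case (gd_step l r u w)
  obtain b where b: "wend R \<omega> u = Some b"
    using gd_step.hyps(2) by (auto simp: wend_append split: option.splits)
  then have "wend R b (l @ w) \<noteq> None" "wend R b (r @ w) \<noteq> None"
    using gd_step.hyps(2,3) by (simp_all add: wend_append_Some)
  then have "wend R b l \<noteq> None" "wend R b r \<noteq> None"
    using wend_append_not_None by metis+
  then have "act_word l (act_word u \<sigma>) = act_word r (act_word u \<sigma>)"
    using act_word_gd_rel[OF gd_step.hyps(1) wend_in_Vs[OF b gd_step.prems(1)]]
      act_word_states[OF gd_step.prems b] by blast
  then show ?case by simp
qed auto

lemma act_El_inv:
  assumes v: "v \<in> Vs R" and x: "x \<in> GV R v" and g: "g \<in> carrier (Gfac R v x)" and \<tau>: "\<tau> \<in> states v"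
  shows "act (El v x g) (act (El v x (inv\<^bsub>Gfac R v x\<^esub> g)) \<tau>) = \<tau>"
  using act_El_merge[OF v x _ g \<tau>] act_El_one[OF v x \<tau>] group_Gfac[OF v x] g
  by (simp add: group.inv_closed group.l_inv)

lemma act_surj:
  assumes a: "a \<in> Vs R" and s: "wend R a [s] = Some b"
  shows "states b \<subseteq> act s ` states a"
proof
  fix \<tau> assume \<tau>: "\<tau> \<in> states b"
  show "\<tau> \<in> act s ` states a"
  proof (cases s)
    case (Ar e)
    then have e: "e \<in> Es R" "src R e = a" "b = tgt R e" using s by (auto split: if_splits)
    then have "act (Ar (rv R e)) \<tau> \<in> states a"
      using act_Ar_states[of "rv R e" \<tau>] \<tau> by simp
    moreover have "act (Ar e) (act (Ar (rv R e)) \<tau>) = \<tau>"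
      using act_Ar_rv[of "rv R e" \<tau>] \<tau> e by simp
    ultimately show ?thesis using Ar by (metis image_eqI)
  next
    case (El v x g)
    then have v: "v = a" and x: "x \<in> GV R a" and g: "g \<in> carrier (Gfac R a x)" and b: "b = a"
      using s by (auto split: if_splits)
    have "inv\<^bsub>Gfac R a x\<^esub> g \<in> carrier (Gfac R a x)"
      using group_Gfac[OF a x] g by (simp add: group.inv_closed)
    then have "act (El a x (inv\<^bsub>Gfac R a x\<^esub> g)) \<tau> \<in> states a"
      using act_El_states[OF a x] \<tau> b by simp
    moreover have "act (El a x g) (act (El a x (inv\<^bsub>Gfac R a x\<^esub> g)) \<tau>) = \<tau>"
      using act_El_inv[OF a x g] \<tau> b by simp
    ultimately show ?thesis using El v by (metis image_eqI)
  qed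
qed

lemma act_word_surj: "a \<in> Vs R \<Longrightarrow> wend R a w = Some b \<Longrightarrow> states b \<subseteq> act_word w ` states a"
proof (induction w arbitrary: a)
  case (Cons s w)
  obtain c where c: "wend R a [s] = Some c" and w: "wend R c w = Some b"
    using Cons.prems(2) wend_append[of R a "[s]" w] by (auto split: option.splits)
  have "states b \<subseteq> act_word w ` states c"
    using Cons.IH[OF wend_in_Vs[OF c Cons.prems(1)] w] .
  also have "\<dots> \<subseteq> act_word w ` act s ` states a"
    using act_surj[OF Cons.prems(1) c] by blast
  finally show ?case by (simp add: image_comp)
qed simp

lemma act_El_probe:
  assumes "v \<in> Vs R" "x \<in> GV R v" "g \<in> carrier (Gfac R v x)"
  shows "act (El v x g) ([], x, \<one>\<^bsub>Gfac R v x\<^esub>) = ([], x, g)"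
  using group.is_monoid[OF group_Gfac[OF assms(1,2)]] assms(3) by (simp add: monoid.l_one)

lemma probe_in_states: "v \<in> Vs R \<Longrightarrow> x \<in> GV R v \<Longrightarrow> ([], x, \<one>\<^bsub>Gfac R v x\<^esub>) \<in> states v"
  using group_Gfac by (simp add: states_base group.is_monoid monoid.one_closed)

lemma act_El_same_factor:
  assumes v: "v \<in> Vs R" and x: "x \<in> GV R v" and g: "g \<in> carrier (Gfac R v x)" "g \<noteq> \<one>\<^bsub>Gfac R v x\<^esub>"
    and eq: "\<forall>\<tau>\<in>states v. act (El v x g) \<tau> = act (El v x' h) \<tau>"
  shows "x' = x"
proof (rule ccontr)
  assume "x' \<noteq> x"
  then show False
    using eq probe_in_states[OF v x] act_El_probe[OF v x g(1)] g(2) by auto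
qed

lemma act_El_nontrivial:
  assumes v: "v \<in> Vs R" and x: "x \<in> GV R v" and g: "g \<in> carrier (Gfac R v x)" "g \<noteq> \<one>\<^bsub>Gfac R v x\<^esub>"
  shows "\<exists>\<tau>\<in>states v. act (El v x g) \<tau> \<noteq> \<tau>"
proof
  show "act (El v x g) ([], x, \<one>\<^bsub>Gfac R v x\<^esub>) \<noteq> ([], x, \<one>\<^bsub>Gfac R v x\<^esub>)"
    using act_El_probe[OF v x g(1)] g(2) by simp
qed (rule probe_in_states[OF v x])

lemma act_El_El_eq_El:
  assumes v: "v \<in> Vs R" and x: "x \<in> GV R v" and x': "x' \<in> GV R v" and x'': "x'' \<in> GV R v"
    and g: "g \<in> carrier (Gfac R v x)" "g \<noteq> \<one>\<^bsub>Gfac R v x\<^esub>"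
    and h: "h \<in> carrier (Gfac R v x')" "h \<noteq> \<one>\<^bsub>Gfac R v x'\<^esub>"
    and k: "k \<in> carrier (Gfac R v x'')" "k \<noteq> \<one>\<^bsub>Gfac R v x''\<^esub>"
    and eq: "\<forall>\<tau>\<in>states v. act (El v x' h) (act (El v x g) \<tau>) = act (El v x'' k) \<tau>"
  shows "x' = x \<and> x'' = x"
proof -
  have probe: "act (El v x' h) (act (El v x g) ([], y, \<one>\<^bsub>Gfac R v y\<^esub>))
      = act (El v x'' k) ([], y, \<one>\<^bsub>Gfac R v y\<^esub>)" if "y \<in> GV R v" for y
    using eq probe_in_states[OF v that] by blast
  have "x'' = x"
  proof (rule ccontr)
    assume "x'' \<noteq> x"
    then show False
      using probe[OF x] probe[OF x''] act_El_probe[OF v x g(1)] act_El_probe[OF v x'' k(1)] g(2) k(2)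
      by (cases "x' = x") auto
  qed
  moreover have "x' = x"
    using probe[OF x'] act_El_probe[OF v x' h(1)] h(2) \<open>x'' = x\<close> by (cases "x' = x") auto
  ultimately show ?thesis by simp
qed

lemma act_El_Ar_eq_Ar:
  assumes f: "f \<in> Es R" and x: "x \<in> GV R (src R f)" and g: "g \<in> carrier (Gfac R (src R f) x)"
    and eq: "\<forall>\<tau>\<in>states (src R f). act (Ar f) (act (El (src R f) x g) \<tau>) = act (Ar f) \<tau>"
  shows "g = \<one>\<^bsub>Gfac R (src R f) x\<^esub>"
proof -
  let ?\<tau> = "([] :: 'e list, x, \<one>\<^bsub>Gfac R (src R f) x\<^esub>)"
  have "act (Ar f) ([], x, g) = act (Ar f) ?\<tau>"
    using eq probe_in_states[OF _ x] act_El_probe[OF _ x g] f by (metis arrow_simps(3))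
  then have "act (Ar (rv R f)) (act (Ar f) ([], x, g)) = act (Ar (rv R f)) (act (Ar f) ?\<tau>)"
    by simp
  then show ?thesis
    using act_Ar_rv[OF f] probe_in_states[OF _ x] states_base[OF x g] f by (simp del: act.simps)
qed

lemma act_factor_square:
  assumes v: "v \<in> Vs R" and x: "x \<in> GV R v"
    and g: "g \<in> carrier (Gfac R v x)" "g \<noteq> \<one>\<^bsub>Gfac R v x\<^esub>" and x2: "x2 \<noteq> x" and x4: "x4 \<noteq> x"
    and loop: "\<forall>\<tau>\<in>states v. act (El v x4 l) (act (El v x3 k) (act (El v x2 h) (act (El v x g) \<tau>))) = \<tau>"
  shows "x3 = x"
proof (rule ccontr)
  assume "x3 \<noteq> x"
  then show False
    using loop probe_in_states[OF v x] act_El_probe[OF v x g(1)] x2 x4 g(2) by auto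
qed

text \<open>In a loop El x, arrow f, El y, arrow back, the letter El x must cross the edge group of f:
  otherwise the probe at x would not return.\<close>

lemma act_arrow_square:
  assumes f: "f \<in> Es R" and x: "x \<in> GV R (src R f)"
    and g: "g \<in> carrier (Gfac R (src R f) x)" "g \<noteq> \<one>\<^bsub>Gfac R (src R f) x\<^esub>"
    and y: "y \<in> GV R (tgt R f)" and k: "k \<in> carrier (Gfac R (tgt R f) y)"
    and loop: "\<forall>\<tau>\<in>states (src R f).
      act (Ar (rv R f)) (act (El (tgt R f) y k) (act (Ar f) (act (El (src R f) x g) \<tau>))) = \<tau>"
  shows "factor_step R (src R f, x) (tgt R f, y)"
proof -
  let ?\<tau>0 = "([] :: 'e list, x, \<one>\<^bsub>Gfac R (src R f) x\<^esub>)" and ?\<tau>1 = "([] :: 'e list, x, g)"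
  have \<tau>0: "?\<tau>0 \<in> states (src R f)" and \<tau>1: "?\<tau>1 \<in> states (src R f)"
    using probe_in_states[OF _ x] states_base[OF x g(1)] f by simp_all
  define \<rho> where "\<rho> = act (El (tgt R f) y k) (act (Ar f) ?\<tau>1)"
  have "\<rho> \<in> states (tgt R f)"
    unfolding \<rho>_def using act_El_states[OF _ y k act_Ar_states[OF f \<tau>1]] f by simp
  then have "\<rho> = act (Ar f) (act (Ar (rv R f)) \<rho>)"
    using act_Ar_rv[of "rv R f" \<rho>] f by simp
  also have "act (Ar (rv R f)) \<rho> = ?\<tau>0"
    unfolding \<rho>_def using loop \<tau>0 act_El_probe[OF arrow_simps(3)[OF f] x g(1)] by metis
  finally have "act (El (tgt R f) y k) (act (Ar f) ?\<tau>1) = act (Ar f) ?\<tau>0"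
    unfolding \<rho>_def .
  moreover have "act (Ar f) ?\<tau>1 \<noteq> act (Ar f) ?\<tau>0"
  proof
    assume "act (Ar f) ?\<tau>1 = act (Ar f) ?\<tau>0"
    then have "?\<tau>1 = ?\<tau>0"
      using act_Ar_rv[OF f \<tau>0] act_Ar_rv[OF f \<tau>1] by metis
    with g(2) show False by simp
  qed
  ultimately obtain \<beta> where \<beta>: "act (Ar f) ?\<tau>1 = ([], y, \<beta>)"
    using act_El_other by metis
  then have "x \<in> emb R f ` EV R f" by (auto split: if_splits)
  then obtain z where "z \<in> EV R f" "x = emb R f z" by blast
  moreover from this have "y = emb R (rv R f) z"
    using \<beta> f by (simp add: emb_inv_emb)
  ultimately show ?thesis
    unfolding factor_step_def using f by blast
qed

end

section \<open>Edges and hyperplanes of X\<close>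

lemma gen_Ar_iff [simp]: "gen R a (Ar e) \<longleftrightarrow> e \<in> Es R \<and> src R e = a"
  by (auto simp: gen_def)

lemma gen_El_iff [simp]:
  "gen R a (El v x g) \<longleftrightarrow> v = a \<and> x \<in> GV R a \<and> g \<in> carrier (Gfac R a x) \<and> g \<noteq> \<one>\<^bsub>Gfac R a x\<^esub>"
  by (auto simp: gen_def)

lemma gen_wend: "gen R a s \<Longrightarrow> wend R a [s] \<noteq> None"
  by (cases s) auto

lemma wend_snoc_gen: "wend R \<omega> w = Some a \<Longrightarrow> gen R a s \<Longrightarrow> \<exists>b. wend R \<omega> (w @ [s]) = Some b"
  using gen_wend by (fastforce simp: wend_append_Some)

lemma Xadj_sym: "Xadj R \<omega> p q \<Longrightarrow> Xadj R \<omega> q p"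
  unfolding Xadj_def by blast

locale based_right_angled_gog = right_angled_gog R for R :: "('v,'e,'x,'y,'g) rag" +
  fixes \<omega> :: 'v
  assumes base_in_Vs: "\<omega> \<in> Vs R"
begin

abbreviation cls :: "('v,'e,'x,'g) letter list \<Rightarrow> ('v,'e,'x,'g) letter list set" where
  "cls w \<equiv> gd_class R \<omega> w"

lemma cls_eqI: "gd_eq R \<omega> w w' \<Longrightarrow> cls w = cls w'"
  using gd_class_eq_iff gd_eq_invariants by blast

lemma cls_eq_imp_wend_eq: "wend R \<omega> w \<noteq> None \<Longrightarrow> cls w = cls w' \<Longrightarrow> wend R \<omega> w' = wend R \<omega> w"
  using gd_class_eq_iff gd_eq_invariants by metis

lemma cls_append_cong:
  assumes "wend R \<omega> w \<noteq> None" "cls w = cls w'" "wend R \<omega> (w @ z) \<noteq> None"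
  shows "cls (w @ z) = cls (w' @ z)"
  using assms gd_class_eq_iff gd_eq_append cls_eqI by metis

lemma cls_append_eq_invariants:
  assumes w: "wend R \<omega> w = Some a" and wu: "wend R \<omega> (w @ u) \<noteq> None"
    and eq: "cls (w @ u) = cls (w @ u')"
  shows "\<forall>\<tau>\<in>states a. act_word u \<tau> = act_word u' \<tau>" "arrow_count u = arrow_count u'"
    "even (num_arrows u) = even (num_arrows u')"
proof -
  have gd: "gd_eq R \<omega> (w @ u) (w @ u')"
    using gd_class_eq_iff wu eq by blast
  show "\<forall>\<tau>\<in>states a. act_word u \<tau> = act_word u' \<tau>"
  proof
    fix \<tau> assume "\<tau> \<in> states a"
    then obtain \<sigma> where "\<sigma> \<in> states \<omega>" "\<tau> = act_word w \<sigma>"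
      using act_word_surj[OF base_in_Vs w] by blast
    then show "act_word u \<tau> = act_word u' \<tau>"
      using act_word_gd_eq[OF gd base_in_Vs] by simp
  qed
  show "arrow_count u = arrow_count u'"
    using gd_eq_invariants[OF gd] by (auto simp: fun_eq_iff arrow_count_append)
  show "even (num_arrows u) = even (num_arrows u')"
    using gd_eq_invariants[OF gd] by (simp add: num_arrows_append) argo
qed

lemma cls_snoc_gen_neq:
  assumes w: "wend R \<omega> w = Some a" and s: "gen R a s"
  shows "cls (w @ [s]) \<noteq> cls w"
proof
  assume "cls (w @ [s]) = cls w"
  then have eq: "cls (w @ [s]) = cls (w @ [])" by simp
  have ws: "wend R \<omega> (w @ [s]) \<noteq> None"
    using gen_wend[OF s] by (simp add: wend_append_Some[OF w])
  show False
  proof (cases s)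
    case (Ar e)
    then show False using cls_append_eq_invariants(3)[OF w ws eq] by simp
  next
    case (El v x g)
    then show False
      using cls_append_eq_invariants(1)[OF w ws eq] s
        act_El_nontrivial[OF wend_in_Vs[OF w base_in_Vs]] by auto
  qed
qed

lemma cls_El_inv:
  assumes w: "wend R \<omega> w = Some a" and x: "x \<in> GV R a" and g: "g \<in> carrier (Gfac R a x)"
  shows "cls (w @ [El a x g, El a x (inv\<^bsub>Gfac R a x\<^esub> g)]) = cls w"
proof -
  have a: "a \<in> Vs R" using wend_in_Vs[OF w base_in_Vs] .
  have "cls (w @ [El a x g, El a x (inv\<^bsub>Gfac R a x\<^esub> g)]) = cls (w @ [El a x \<one>\<^bsub>Gfac R a x\<^esub>])"
    using cls_eqI[OF gd_eq_merge[OF w a x g]] group_Gfac[OF a x] g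
    by (simp add: group.inv_closed group.r_inv)
  also have "\<dots> = cls w"
    using cls_eqI[OF gd_eq_one[OF w a x]] .
  finally show ?thesis .
qed

lemma gen_inverse:
  assumes w: "wend R \<omega> w = Some a" and s: "gen R a s"
  obtains b s' where "wend R \<omega> (w @ [s]) = Some b" "gen R b s'" "cls (w @ [s, s']) = cls w"
proof (cases s)
  case (Ar e)
  then have "wend R \<omega> (w @ [s]) = Some (tgt R e)" "gen R (tgt R e) (Ar (rv R e))"
    using s by (simp_all add: wend_append_Some[OF w])
  moreover have "cls (w @ [s, Ar (rv R e)]) = cls w"
    using cls_eqI[OF gd_eq_arrow_rv[OF w]] Ar s by simp
  ultimately show ?thesis using that by blast
next
  case (El v x g)
  then have x: "v = a" "x \<in> GV R a" "g \<in> carrier (Gfac R a x)" "g \<noteq> \<one>\<^bsub>Gfac R a x\<^esub>"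
    using s by simp_all
  have "gen R a (El a x (inv\<^bsub>Gfac R a x\<^esub> g))"
    using x group_Gfac[OF wend_in_Vs[OF w base_in_Vs] x(2)]
    by (simp add: group.inv_closed group.inv_eq_1_iff)
  moreover have "wend R \<omega> (w @ [s]) = Some a"
    using El x by (simp add: wend_append_Some[OF w])
  ultimately show ?thesis
    using that cls_El_inv[OF w x(2,3)] El x(1) by blast
qed

lemma Xadj_step:
  assumes pq: "Xadj R \<omega> p q" and w: "wend R \<omega> w = Some a" and p: "p = cls w"
  obtains s where "gen R a s" "q = cls (w @ [s])"
proof -
  obtain w0 a0 s0 where w0: "wend R \<omega> w0 = Some a0" and s0: "gen R a0 s0"
    and edge: "(p = cls w0 \<and> q = cls (w0 @ [s0])) \<or> (q = cls w0 \<and> p = cls (w0 @ [s0]))"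
    using pq unfolding Xadj_def by blast
  have ws0: "wend R \<omega> (w0 @ [s0]) \<noteq> None"
    using gen_wend[OF s0] by (simp add: wend_append_Some[OF w0])
  from edge show ?thesis
  proof
    assume e: "p = cls w0 \<and> q = cls (w0 @ [s0])"
    then have "cls w0 = cls w" using p by simp
    then have "a0 = a" and "q = cls (w @ [s0])"
      using cls_eq_imp_wend_eq[of w0 w] cls_append_cong[of w0 w "[s0]"] w w0 ws0 e by simp_all
    then show ?thesis using that s0 by blast
  next
    assume qp: "q = cls w0 \<and> p = cls (w0 @ [s0])"
    obtain b s' where b: "wend R \<omega> (w0 @ [s0]) = Some b" and s': "gen R b s'"
      and cancel: "cls ((w0 @ [s0]) @ [s']) = cls w0"
      using gen_inverse[OF w0 s0] by auto
    have "cls (w0 @ [s0]) = cls w" using p qp by simp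
    then have "b = a" using cls_eq_imp_wend_eq[of "w0 @ [s0]" w] b w by simp
    moreover have "wend R \<omega> ((w0 @ [s0]) @ [s']) \<noteq> None"
      using gen_wend[OF s'] wend_append_Some[OF b, of "[s']"] by simp
    then have "cls ((w0 @ [s0]) @ [s']) = cls (w @ [s'])"
      using cls_append_cong \<open>cls (w0 @ [s0]) = cls w\<close> b by blast
    ultimately show ?thesis
      using that s' cancel qp by auto
  qed
qed

lemma Xadj_class:
  assumes "Xadj R \<omega> p q"
  obtains w a where "wend R \<omega> w = Some a" "p = cls w"
proof -
  obtain w0 a0 s0 where w0: "wend R \<omega> w0 = Some a0" and s0: "gen R a0 s0"
    and edge: "(p = cls w0 \<and> q = cls (w0 @ [s0])) \<or> (q = cls w0 \<and> p = cls (w0 @ [s0]))"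
    using assms unfolding Xadj_def by blast
  moreover obtain b where "wend R \<omega> (w0 @ [s0]) = Some b"
    using gen_wend[OF s0] by (auto simp: wend_append_Some[OF w0])
  ultimately show ?thesis using that by blast
qed

lemma Xadj_irrefl: "Xadj R \<omega> p q \<Longrightarrow> p \<noteq> q"
  by (metis Xadj_class Xadj_step cls_snoc_gen_neq)

definition factor_edge ::
    "('v,'e,'x,'g) letter list set \<Rightarrow> ('v,'e,'x,'g) letter list set \<Rightarrow> 'v \<Rightarrow> 'x \<Rightarrow> bool" where
  "factor_edge p q A X \<longleftrightarrow>
     (\<exists>w g. wend R \<omega> w = Some A \<and> gen R A (El A X g) \<and> p = cls w \<and> q = cls (w @ [El A X g]))"

lemma factor_edge_Xadj: "factor_edge p q A X \<Longrightarrow> Xadj R \<omega> p q"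
  unfolding factor_edge_def Xadj_def by blast

lemma factor_edge_at:
  assumes pq: "factor_edge p q A X" and w: "wend R \<omega> w \<noteq> None" and p: "p = cls w"
  shows "wend R \<omega> w = Some A \<and> (\<exists>g. gen R A (El A X g) \<and> q = cls (w @ [El A X g]))"
proof -
  obtain w0 g where w0: "wend R \<omega> w0 = Some A" and g: "gen R A (El A X g)"
    and p0: "p = cls w0" and q: "q = cls (w0 @ [El A X g])"
    using pq unfolding factor_edge_def by blast
  have "wend R \<omega> w = Some A"
    using cls_eq_imp_wend_eq[of w0 w] w0 p p0 by simp
  moreover have "q = cls (w @ [El A X g])"
    using cls_append_cong[of w0 w "[El A X g]"] w0 g p p0 q by (simp add: wend_append_Some)
  ultimately show ?thesis using g by blast
qed

lemma factor_edge_sym: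
  assumes "factor_edge p q A X"
  shows "factor_edge q p A X"
proof -
  obtain w g where w: "wend R \<omega> w = Some A" and g: "gen R A (El A X g)"
    and p: "p = cls w" and q: "q = cls (w @ [El A X g])"
    using assms unfolding factor_edge_def by blast
  have grp: "group (Gfac R A X)"
    using group_Gfac[OF wend_in_Vs[OF w base_in_Vs]] g by simp
  have "wend R \<omega> (w @ [El A X g]) = Some A"
    using g by (simp add: wend_append_Some[OF w])
  moreover have "gen R A (El A X (inv\<^bsub>Gfac R A X\<^esub> g))"
    using g grp by (simp add: group.inv_closed group.inv_eq_1_iff)
  moreover have "p = cls ((w @ [El A X g]) @ [El A X (inv\<^bsub>Gfac R A X\<^esub> g)])"
    using cls_El_inv[OF w] g p by simp
  ultimately show ?thesis
    unfolding factor_edge_def using q by blast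
qed

lemma factor_edge_unique:
  assumes "factor_edge p q A X" and "factor_edge p q B Y"
  shows "A = B \<and> X = Y"
proof -
  obtain w g where w: "wend R \<omega> w = Some A" and g: "gen R A (El A X g)"
    and p: "p = cls w" and q: "q = cls (w @ [El A X g])"
    using assms(1) unfolding factor_edge_def by blast
  obtain h where B: "wend R \<omega> w = Some B" and h: "gen R B (El B Y h)"
    and q': "q = cls (w @ [El B Y h])"
    using factor_edge_at[OF assms(2) _ p] w by auto
  have AB: "A = B" using w B by simp
  have "\<forall>\<tau>\<in>states A. act (El A X g) \<tau> = act (El A Y h) \<tau>"
    using cls_append_eq_invariants(1)[OF w _, of "[El A X g]" "[El A Y h]"] g q q' AB
    by (simp add: wend_append_Some[OF w])
  then have "Y = X"
    using act_El_same_factor[OF wend_in_Vs[OF w base_in_Vs]] g by auto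
  with AB show ?thesis by simp
qed

lemma cls_same_factor_pair:
  assumes w: "wend R \<omega> w = Some A" and X: "X \<in> GV R A"
    and g: "g \<in> carrier (Gfac R A X)" and h: "h \<in> carrier (Gfac R A X)"
  shows "cls (w @ [El A X g, El A X h]) = cls w \<or>
    Xadj R \<omega> (cls w) (cls (w @ [El A X g, El A X h]))"
proof -
  have A: "A \<in> Vs R" using wend_in_Vs[OF w base_in_Vs] .
  have gh: "g \<otimes>\<^bsub>Gfac R A X\<^esub> h \<in> carrier (Gfac R A X)"
    using group.subgroup_self[OF group_Gfac[OF A X]] g h by (simp add: subgroup.m_closed)
  have merge: "cls (w @ [El A X g, El A X h]) = cls (w @ [El A X (g \<otimes>\<^bsub>Gfac R A X\<^esub> h)])"
    using cls_eqI[OF gd_eq_merge[OF w A X g h]] .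
  show ?thesis
  proof (cases "g \<otimes>\<^bsub>Gfac R A X\<^esub> h = \<one>\<^bsub>Gfac R A X\<^esub>")
    case True
    then show ?thesis using merge cls_eqI[OF gd_eq_one[OF w A X]] by simp
  next
    case False
    then have "gen R A (El A X (g \<otimes>\<^bsub>Gfac R A X\<^esub> h))"
      using X gh by simp
    then show ?thesis
      using merge w unfolding Xadj_def by blast
  qed
qed

lemma triangle_letters:
  assumes w: "wend R \<omega> w = Some A" and g: "gen R A (El A X g)"
    and s: "gen R A s" and t: "gen R A t"
    and eq: "cls (w @ [El A X g, s]) = cls (w @ [t])"
  shows "\<exists>h k. s = El A X h \<and> t = El A X k"
proof -
  have ws: "wend R \<omega> (w @ [El A X g, s]) \<noteq> None"
    using gen_wend[OF s] g by (simp add: wend_append_Some[OF w])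
  note inv = cls_append_eq_invariants[OF w ws eq]
  show ?thesis
  proof (cases s)
    case (Ar f)
    then obtain f' where t_eq: "t = Ar f'" using inv(3) by (cases t) auto
    then have "signed_arrow f = signed_arrow f'"
      using inv(2) Ar by (simp add: fun_eq_iff)
    then have "f' = f" using signed_arrow_inj s t Ar t_eq by simp
    then have "\<forall>\<tau>\<in>states (src R f). act (Ar f) (act (El (src R f) X g) \<tau>) = act (Ar f) \<tau>"
      using inv(1) Ar t_eq s by simp
    then show ?thesis
      using act_El_Ar_eq_Ar[of f X g] Ar s g by simp
  next
    case (El v y h)
    then obtain z k where t_eq: "t = El A z k" using inv(3) t by (cases t) auto
    have "\<forall>\<tau>\<in>states A. act (El A y h) (act (El A X g) \<tau>) = act (El A z k) \<tau>"
      using inv(1) El t_eq s by simp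
    then have "y = X \<and> z = X"
      using act_El_El_eq_El[OF wend_in_Vs[OF w base_in_Vs], of X y z g h k] g s t El t_eq by simp
    then show ?thesis using El t_eq s by simp
  qed
qed

lemma triangle_factor_edges:
  assumes pq: "factor_edge p q A X" and qr: "Xadj R \<omega> q r" and pr: "Xadj R \<omega> p r"
  shows "factor_edge q r A X \<and> factor_edge p r A X"
proof -
  obtain w g where w: "wend R \<omega> w = Some A" and g: "gen R A (El A X g)"
    and p: "p = cls w" and q: "q = cls (w @ [El A X g])"
    using pq unfolding factor_edge_def by blast
  have wq: "wend R \<omega> (w @ [El A X g]) = Some A"
    using g by (simp add: wend_append_Some[OF w])
  obtain s where s: "gen R A s" and r: "r = cls ((w @ [El A X g]) @ [s])"
    using Xadj_step[OF qr wq q] .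
  obtain t where t: "gen R A t" and r': "r = cls (w @ [t])"
    using Xadj_step[OF pr w p] .
  obtain h k where "s = El A X h" "t = El A X k"
    using triangle_letters[OF w g s t] r r' by auto
  then show ?thesis
    unfolding factor_edge_def using w wq s t p q r r' by blast
qed

lemma loop_arrow_patterns:
  assumes arrows: "\<And>e. Ar e \<in> set [s2, s3, s4] \<Longrightarrow> e \<in> Es R"
    and count: "arrow_count [El v x g, s2, s3, s4] = arrow_count []"
    and parity: "even (num_arrows [El v x g, s2, s3, s4]) = even (num_arrows [])"
  shows "(\<forall>e. Ar e \<notin> set [s2, s3, s4])
    \<or> (\<exists>f. s2 = Ar f \<and> s3 = Ar (rv R f) \<and> (\<forall>e. s4 \<noteq> Ar e))
    \<or> (\<exists>f. s3 = Ar f \<and> s4 = Ar (rv R f) \<and> (\<forall>e. s2 \<noteq> Ar e))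
    \<or> (\<exists>f. s2 = Ar f \<and> s4 = Ar (rv R f) \<and> (\<forall>e. s3 \<noteq> Ar e))"
  using arrows count parity signed_arrow_cancel
  by (cases s2; cases s3; cases s4) (auto simp: fun_eq_iff)

lemma square_factor_letters:
  assumes w: "wend R \<omega> w = Some A"
    and g: "gen R A (El A X g)" and h: "gen R A (El A X2 h)"
    and k: "gen R A (El A X3 k)" and l: "gen R A (El A X4 l)"
    and loop: "cls (w @ [El A X g, El A X2 h, El A X3 k, El A X4 l]) = cls w"
    and ac: "cls (w @ [El A X g, El A X2 h]) \<noteq> cls w"
      "\<not> Xadj R \<omega> (cls w) (cls (w @ [El A X g, El A X2 h]))"
    and bd: "cls (w @ [El A X g, El A X2 h, El A X3 k]) \<noteq> cls (w @ [El A X g])"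
      "\<not> Xadj R \<omega> (cls (w @ [El A X g])) (cls (w @ [El A X g, El A X2 h, El A X3 k]))"
  shows "X3 = X"
proof -
  let ?wd = "w @ [El A X g, El A X2 h, El A X3 k]"
  have wd: "wend R \<omega> ?wd = Some A"
    using g h k by (simp add: wend_append_Some[OF w])
  have "X2 \<noteq> X"
    using cls_same_factor_pair[OF w, of X g h] g h ac by auto
  moreover have "X4 \<noteq> X"
  proof
    assume X4: "X4 = X"
    have "cls (?wd @ [El A X4 l]) = cls w" using loop by simp
    then have "cls ((?wd @ [El A X4 l]) @ [El A X g]) = cls (w @ [El A X g])"
      using cls_append_cong[of "?wd @ [El A X4 l]" w "[El A X g]"] g h k l
      by (simp add: wend_append_Some[OF w])
    then have eq: "cls (?wd @ [El A X l, El A X g]) = cls (w @ [El A X g])"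
      using X4 by simp
    have "cls (?wd @ [El A X l, El A X g]) = cls ?wd \<or> Xadj R \<omega> (cls ?wd) (cls (?wd @ [El A X l, El A X g]))"
      using cls_same_factor_pair[OF wd, of X l g] g l X4 by simp
    then show False
      unfolding eq using bd Xadj_sym by metis
  qed
  moreover have "\<forall>\<tau>\<in>states A. act_word [El A X g, El A X2 h, El A X3 k, El A X4 l] \<tau> = act_word [] \<tau>"
    using cls_append_eq_invariants(1)[OF w _, of "[El A X g, El A X2 h, El A X3 k, El A X4 l]" "[]"]
      loop g h k l
    by (simp add: wend_append_Some[OF w])
  ultimately show ?thesis
    using act_factor_square[OF wend_in_Vs[OF w base_in_Vs], of X g X2 X4 l X3 k h] g by simp
qed

lemma square_words:
  assumes bc: "Xadj R \<omega> b c" and cd: "Xadj R \<omega> c d" and da: "Xadj R \<omega> d a"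
    and ab: "factor_edge a b A X"
  obtains w g s2 B s3 C s4 where "wend R \<omega> w = Some A" "gen R A (El A X g)"
    "a = cls w" "b = cls (w @ [El A X g])"
    "gen R A s2" "wend R \<omega> (w @ [El A X g, s2]) = Some B" "c = cls (w @ [El A X g, s2])"
    "gen R B s3" "wend R \<omega> (w @ [El A X g, s2, s3]) = Some C" "d = cls (w @ [El A X g, s2, s3])"
    "gen R C s4" "a = cls (w @ [El A X g, s2, s3, s4])"
proof -
  obtain w g where w: "wend R \<omega> w = Some A" and g: "gen R A (El A X g)"
    and a: "a = cls w" and b: "b = cls (w @ [El A X g])"
    using ab unfolding factor_edge_def by blast
  let ?s1 = "El A X g"
  have w1: "wend R \<omega> (w @ [?s1]) = Some A" using g by (simp add: wend_append_Some[OF w])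
  obtain s2 where s2: "gen R A s2" and c: "c = cls ((w @ [?s1]) @ [s2])"
    using Xadj_step[OF bc w1 b] .
  obtain B where w2: "wend R \<omega> ((w @ [?s1]) @ [s2]) = Some B"
    using wend_snoc_gen[OF w1 s2] by blast
  obtain s3 where s3: "gen R B s3" and d: "d = cls (((w @ [?s1]) @ [s2]) @ [s3])"
    using Xadj_step[OF cd w2 c] .
  obtain C where w3: "wend R \<omega> (((w @ [?s1]) @ [s2]) @ [s3]) = Some C"
    using wend_snoc_gen[OF w2 s3] by blast
  obtain s4 where s4: "gen R C s4" and a4: "a = cls ((((w @ [?s1]) @ [s2]) @ [s3]) @ [s4])"
    using Xadj_step[OF da w3 d] .
  show ?thesis
    using that[OF w g a b s2 _ _ s3 _ _ s4] w2 w3 c d a4 by simp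
qed

lemma square_factor_case:
  assumes w: "wend R \<omega> w = Some A" and g: "gen R A (El A X g)"
    and s2: "gen R A s2" and w2: "wend R \<omega> (w @ [El A X g, s2]) = Some B"
    and s3: "gen R B s3" and w3: "wend R \<omega> (w @ [El A X g, s2, s3]) = Some C" and s4: "gen R C s4"
    and factors: "\<forall>e. Ar e \<notin> set [s2, s3, s4]"
    and loop: "cls (w @ [El A X g, s2, s3, s4]) = cls w"
    and ac: "cls (w @ [El A X g, s2]) \<noteq> cls w" "\<not> Xadj R \<omega> (cls w) (cls (w @ [El A X g, s2]))"
    and bd: "cls (w @ [El A X g, s2, s3]) \<noteq> cls (w @ [El A X g])"
      "\<not> Xadj R \<omega> (cls (w @ [El A X g])) (cls (w @ [El A X g, s2, s3]))"
  shows "factor_edge (cls (w @ [El A X g, s2])) (cls (w @ [El A X g, s2, s3])) A X"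
proof -
  obtain X2 h where s2_eq: "s2 = El A X2 h"
    using factors s2 by (cases s2) auto
  then have "B = A"
    using w2 s2 g by (simp add: wend_append_Some[OF w])
  obtain X3 k where s3_eq: "s3 = El A X3 k"
    using factors s3 \<open>B = A\<close> by (cases s3) auto
  then have "C = A"
    using w3 s2 s3 g s2_eq \<open>B = A\<close> by (simp add: wend_append_Some[OF w])
  obtain X4 l where s4_eq: "s4 = El A X4 l"
    using factors s4 \<open>C = A\<close> by (cases s4) auto
  have gens: "gen R A (El A X2 h)" "gen R A (El A X3 k)" "gen R A (El A X4 l)"
    using s2 s3 s4 s2_eq s3_eq s4_eq \<open>B = A\<close> \<open>C = A\<close> by simp_all
  have "X3 = X"
    using square_factor_letters[OF w g gens] loop ac bd s2_eq s3_eq s4_eq by simp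
  moreover have "wend R \<omega> (w @ [El A X g, s2]) = Some A"
    using w2 \<open>B = A\<close> by simp
  ultimately show ?thesis
    unfolding factor_edge_def using gens(2) s3_eq
    by (intro exI[of _ "w @ [El A X g, s2]"] exI[of _ k]) simp
qed

lemma square_opposite_edge:
  assumes dist: "distinct [a, b, c, d]" and bc: "Xadj R \<omega> b c" and cd: "Xadj R \<omega> c d"
    and da: "Xadj R \<omega> d a" and ac: "\<not> Xadj R \<omega> a c" and bd: "\<not> Xadj R \<omega> b d"
    and ab: "factor_edge a b A X"
  shows "\<exists>B Y. factor_edge c d B Y \<and> (factor_step R)\<^sup>*\<^sup>* (A, X) (B, Y)"
proof -
  obtain w g s2 B s3 C s4 where w: "wend R \<omega> w = Some A" and g: "gen R A (El A X g)"
    and a: "a = cls w" and b: "b = cls (w @ [El A X g])"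
    and s2: "gen R A s2" and w2: "wend R \<omega> (w @ [El A X g, s2]) = Some B"
    and c: "c = cls (w @ [El A X g, s2])" and s3: "gen R B s3"
    and w3: "wend R \<omega> (w @ [El A X g, s2, s3]) = Some C" and d: "d = cls (w @ [El A X g, s2, s3])"
    and s4: "gen R C s4" and a4: "a = cls (w @ [El A X g, s2, s3, s4])"
    using square_words[OF bc cd da ab] .
  have ws: "wend R \<omega> (w @ [El A X g, s2, s3, s4]) \<noteq> None"
    using wend_snoc_gen[OF w3 s4] by auto
  have loop: "cls (w @ [El A X g, s2, s3, s4]) = cls (w @ [])" using a a4 by simp
  note inv = cls_append_eq_invariants[OF w ws loop]
  have "\<And>e. Ar e \<in> set [s2, s3, s4] \<Longrightarrow> e \<in> Es R"
    using s2 s3 s4 by (auto simp: gen_def)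
  from loop_arrow_patterns[OF this inv(2,3)]
  consider (factors) "\<forall>e. Ar e \<notin> set [s2, s3, s4]"
    | (back_to_b) f where "s2 = Ar f" "s3 = Ar (rv R f)"
    | (back_to_c) f where "s3 = Ar f" "s4 = Ar (rv R f)"
    | (across) f where "s2 = Ar f" "s4 = Ar (rv R f)" "\<forall>e. s3 \<noteq> Ar e"
    by blast
  then show ?thesis
  proof cases
    case factors
    have "c \<noteq> a" "d \<noteq> b" using dist by auto
    then have "factor_edge c d A X"
      using square_factor_case[OF w g s2 w2 s3 w3 s4 factors] loop ac bd a b c d by simp
    then show ?thesis by blast
  next
    case back_to_b
    have w1: "wend R \<omega> (w @ [El A X g]) = Some A"
      using g by (simp add: wend_append_Some[OF w])
    have "d = b"
      using cls_eqI[OF gd_eq_arrow_rv[OF w1]] back_to_b s2 b d by simp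
    then show ?thesis using dist by simp
  next
    case back_to_c
    then have "a = c"
      using cls_eqI[OF gd_eq_arrow_rv[OF w2]] s3 a4 c by simp
    then show ?thesis using dist by simp
  next
    case across
    obtain Y k where s3_eq: "s3 = El B Y k"
      using across(3) s3 by (cases s3) auto
    have B: "B = tgt R f"
      using w2 g s2 across(1) by (simp add: wend_append_Some[OF w])
    have "factor_step R (A, X) (B, Y)"
      using act_arrow_square[of f X g Y k] inv(1) across s2 s3 s3_eq g B by auto
    moreover have "factor_edge c d B Y"
      unfolding factor_edge_def using w2 s3 s3_eq c d
      by (intro exI[of _ "w @ [El A X g, s2]"] exI[of _ k]) simp
    ultimately show ?thesis by blast
  qed
qed

definition labelled_from :: "'v \<Rightarrow> 'x \<Rightarrow> ('v,'e,'x,'g) letter list set set \<Rightarrow> bool" where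
  "labelled_from u x \<epsilon> \<longleftrightarrow>
     (\<exists>p q A X. \<epsilon> = {p, q} \<and> factor_edge p q A X \<and> (factor_step R)\<^sup>*\<^sup>* (u, x) (A, X))"

lemma triangle_labelled_from:
  assumes ab: "Xadj R \<omega> a b" and bc: "Xadj R \<omega> b c" and ac: "Xadj R \<omega> a c"
    and sub: "\<epsilon>1 \<subseteq> {a, b, c}" "\<epsilon>2 \<subseteq> {a, b, c}" and \<epsilon>2: "\<epsilon>2 \<in> Xedges R \<omega>"
    and label: "labelled_from u x \<epsilon>1"
  shows "labelled_from u x \<epsilon>2"
proof -
  obtain p q A X where \<epsilon>1: "\<epsilon>1 = {p, q}" and pq: "factor_edge p q A X"
    and steps: "(factor_step R)\<^sup>*\<^sup>* (u, x) (A, X)"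
    using label unfolding labelled_from_def by blast
  obtain p2 q2 where \<epsilon>2_eq: "\<epsilon>2 = {p2, q2}" and adj2: "Xadj R \<omega> p2 q2"
    using \<epsilon>2 unfolding Xedges_def by blast
  have "p2 \<noteq> q2" using Xadj_irrefl[OF adj2] .
  have "p \<noteq> q" using Xadj_irrefl[OF factor_edge_Xadj[OF pq]] .
  have adj: "\<And>s t. s \<in> {a, b, c} \<Longrightarrow> t \<in> {a, b, c} \<Longrightarrow> s \<noteq> t \<Longrightarrow> Xadj R \<omega> s t"
    using ab bc ac Xadj_sym[OF ab] Xadj_sym[OF bc] Xadj_sym[OF ac] by blast
  have pq_in: "p \<in> {a, b, c}" "q \<in> {a, b, c}" using sub(1) \<epsilon>1 by auto
  have "a \<noteq> b" "b \<noteq> c" "a \<noteq> c" using Xadj_irrefl ab bc ac by auto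
  define r where "r = (if a \<notin> {p, q} then a else if b \<notin> {p, q} then b else c)"
  have r: "r \<in> {a, b, c}" "r \<noteq> p" "r \<noteq> q" "{a, b, c} \<subseteq> {p, q, r}"
    using pq_in \<open>p \<noteq> q\<close> \<open>a \<noteq> b\<close> \<open>b \<noteq> c\<close> \<open>a \<noteq> c\<close> unfolding r_def by auto
  have "factor_edge q r A X" "factor_edge p r A X"
    using triangle_factor_edges[OF pq adj[OF pq_in(2) r(1)] adj[OF pq_in(1) r(1)]] r by simp_all
  then have edges: "\<And>s t. s \<in> {p, q, r} \<Longrightarrow> t \<in> {p, q, r} \<Longrightarrow> s \<noteq> t \<Longrightarrow> factor_edge s t A X"
    using pq factor_edge_sym by blast
  have "p2 \<in> {p, q, r}" "q2 \<in> {p, q, r}"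
    using sub(2) \<epsilon>2_eq r(4) by auto
  then show ?thesis
    unfolding labelled_from_def using \<epsilon>2_eq edges \<open>p2 \<noteq> q2\<close> steps by blast
qed

lemma square_labelled_from:
  assumes "distinct [a, b, c, d]" "Xadj R \<omega> b c" "Xadj R \<omega> c d" "Xadj R \<omega> d a"
    "\<not> Xadj R \<omega> a c" "\<not> Xadj R \<omega> b d"
    and label: "labelled_from u x {a, b}"
  shows "labelled_from u x {c, d}"
proof -
  obtain p q A X where "{a, b} = {p, q}" and pq: "factor_edge p q A X"
    and steps: "(factor_step R)\<^sup>*\<^sup>* (u, x) (A, X)"
    using label unfolding labelled_from_def by meson
  then have "factor_edge a b A X"
    using factor_edge_sym by (metis doubleton_eq_iff)
  then obtain B Y where "factor_edge c d B Y" "(factor_step R)\<^sup>*\<^sup>* (A, X) (B, Y)"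
    using square_opposite_edge assms(1-6) by blast
  then show ?thesis
    unfolding labelled_from_def using steps by (blast intro: rtranclp_trans)
qed

lemma hyp_rel_labelled_from:
  assumes hyp: "(\<epsilon>1, \<epsilon>2) \<in> hyp_rel R \<omega>" and label: "labelled_from u x \<epsilon>1"
  shows "labelled_from u x \<epsilon>2"
  using hyp unfolding hyp_rel_def
proof (clarify, elim disjE exE conjE)
  fix a b c assume "Xadj R \<omega> a b" "Xadj R \<omega> b c" "Xadj R \<omega> a c" "\<epsilon>1 \<subseteq> {a, b, c}" "\<epsilon>2 \<subseteq> {a, b, c}"
    and "\<epsilon>2 \<in> Xedges R \<omega>"
  then show ?thesis by (rule triangle_labelled_from[OF _ _ _ _ _ _ label])
next
  fix a b c d assume dist: "distinct [a, b, c, d]" and adj: "Xadj R \<omega> a b" "Xadj R \<omega> b c"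
    "Xadj R \<omega> c d" "Xadj R \<omega> d a" and nadj: "\<not> Xadj R \<omega> a c" "\<not> Xadj R \<omega> b d"
    and \<epsilon>: "{\<epsilon>1, \<epsilon>2} = {{a, b}, {c, d}}"
  have "distinct [c, d, a, b]" using dist by auto
  moreover have "\<not> Xadj R \<omega> c a" "\<not> Xadj R \<omega> d b"
    using nadj Xadj_sym[of R \<omega> c a] Xadj_sym[of R \<omega> d b] by blast+
  ultimately have "labelled_from u x {c, d} \<Longrightarrow> labelled_from u x {a, b}"
    using square_labelled_from[of c d a b] adj by blast
  then show ?thesis
    using \<epsilon> label square_labelled_from[OF dist adj(2-4) nadj] by (metis doubleton_eq_iff)
qed

lemma edge_factor_label_factor_edge:
  "edge_factor_label R \<omega> \<epsilon> u x \<Longrightarrow> \<exists>p q. \<epsilon> = {p, q} \<and> factor_edge p q u x"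
  unfolding edge_factor_label_def factor_edge_def by auto

lemma same_hyperplane_factor_steps:
  assumes "edge_factor_label R \<omega> \<epsilon> u x" and "edge_factor_label R \<omega> \<epsilon>' v y"
    and "same_hyperplane R \<omega> \<epsilon> \<epsilon>'"
  shows "(factor_step R)\<^sup>*\<^sup>* (u, x) (v, y)"
proof -
  have "labelled_from u x \<epsilon>"
    using edge_factor_label_factor_edge[OF assms(1)] unfolding labelled_from_def by blast
  with assms(3) have "labelled_from u x \<epsilon>'"
    unfolding same_hyperplane_def by (induction rule: rtrancl_induct) (auto intro: hyp_rel_labelled_from)
  then obtain p q A X where \<epsilon>': "\<epsilon>' = {p, q}" and pq: "factor_edge p q A X"
    and steps: "(factor_step R)\<^sup>*\<^sup>* (u, x) (A, X)"
    unfolding labelled_from_def by blast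
  obtain p' q' where "\<epsilon>' = {p', q'}" "factor_edge p' q' v y"
    using edge_factor_label_factor_edge[OF assms(2)] by blast
  then have "factor_edge p q v y"
    using \<epsilon>' factor_edge_sym by (metis doubleton_eq_iff)
  then show ?thesis
    using factor_edge_unique[OF pq] steps by blast
qed

end

theorem lemma4p10:
  fixes R :: "('v,'e,'x,'y,'g) rag" and \<omega> :: 'v
  assumes "rag_gog R" and "\<omega> \<in> Vs R"
    and "edge_factor_label R \<omega> \<epsilon> u x"
    and "edge_factor_label R \<omega> \<epsilon>' v y"
    and "same_hyperplane R \<omega> \<epsilon> \<epsilon>'"
  shows "\<exists>\<gamma>. opath R u \<gamma> v \<and> phi_path R \<gamma> (Afac R u x) = Afac R v y"
proof -
  interpret based_right_angled_gog R \<omega>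
    using assms(1,2) by unfold_locales
  show ?thesis
    using factor_steps_imp_path[OF same_hyperplane_factor_steps[OF assms(3-5)]] .
qed

end
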